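(* For all integers $n,d,p\ge 0$, $$P_p(n,\omega^d)=\begin{cases}0 & d=0,\ n\ge 2\\ 1 & n=0,\ p=0\\ 0 & n=0,\ p\ge 1\\ 1 & d=0,\ n=1,\ p=0\\ 0 & d=0,\ n=1,\ p\ge 1\\ 1 & d=1,\ n\ge 1,\ n=p\\ 0 & d=1,\ n\ge1,\ n\ne p\\ 0 & d\ge 2,\ n\ge 1,\ p=0\\ \displaystyle\sum_{j=1}^{n}\sum_{i=0}^{p-1}\binom{p-1}{i}P_i(j,\omega^{d-1})\,P_{p-1-i}(n-j,\omega^{d}) & d\ge2,\ n\ge1,\ p\ge1.\end{cases}$$
   Context: Coloring rules. Fix integers $n,d,k\ge 0$. Every ordinal $\beta<\omega^d\cdot k$ is uniquely written $\beta=\omega^d\cdot b+\omega^{d-1}a_{d-1}+\cdots+\omega a_1+a_0$ with $0\le b<k$ and $a_j\in\mathbb{N}$. A coloring rule (CR) on $\binom{\omega^d\cdot k}{n}$ is a pair $(\mathcal{Y},\preceq)$ where $\mathcal{Y}:\{1,\dots,n\}\to\{0,\dots,k-1\}$ (one writes $b_i=\mathcal{Y}(i)$) and $\preceq$ is a total preorder on the index set $I=\{(i,j):1\le i\le n,\ 0\le j<d\}$ (one thinks of $(i,j)$ as a variable $a_{i,j}$; write $(i,j)\equiv(i',j')$ if both $(i,j)\preceq(i',j')$ and $(i',j')\preceq(i,j)$, and $(i,j)\prec(i',j')$ if $(i,j)\preceq(i',j')$ but not $(i',j')\preceq(i,j)$), satisfying: (1) if $d\ge1$ then $(i,0)\prec(i',0)$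 whenever $i<i'$; if $d=0$ then $\mathcal{Y}(i)<\mathcal{Y}(i')$ whenever $i<i'$; (2) if $(i,j)\equiv(i',j)$ for some $j$, then $\mathcal{Y}(i)=\mathcal{Y}(i')$; (3) $(i,j)\prec(i,j')$ whenever $j>j'$; (4) $(i,j)\equiv(i',j')$ implies $j=j'$; (5) for $j>0$, if $(i,j)\not\equiv(i',j)$ then $(i,j-1)\not\equiv(i',j-1)$. The size of a CR is the number of $\equiv$-equivalence classes of $I$. $P_p(n,\omega^d\cdot k)$ denotes the number of CRs of size $p$ on $\binom{\omega^d\cdot k}{n}$, and $P_p(n,\omega^d)$ means $P_p(n,\omega^d\cdot 1)$ (so all $b_i=0$). *)

theory Defs
  imports "HOL-Library.FuncSet"
begin

definition CR_index :: "nat \<Rightarrow> nat \<Rightarrow> (nat \<times> nat) set" where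
  "CR_index n d = {1..n} \<times> {0..<d}"

text \<open>A coloring rule on [omega^d * k]^n: a pair (Y, R), where Y : {1..n} -> {0..k-1}
  (extensional function) and R is a total preorder on the index set,
  (x,y) \<in> R meaning x \<preceq> y.\<close>
definition is_CR ::
  "nat \<Rightarrow> nat \<Rightarrow> nat \<Rightarrow> (nat \<Rightarrow> nat) \<Rightarrow> ((nat \<times> nat) \<times> (nat \<times> nat)) set \<Rightarrow> bool" where
  "is_CR n d k Y R \<longleftrightarrow>
     (let I = CR_index n d;
          eqv = (\<lambda>x y. (x,y) \<in> R \<and> (y,x) \<in> R);
          lt = (\<lambda>x y. (x,y) \<in> R \<and> (y,x) \<notin> R)
      in Y \<in> {1..n} \<rightarrow>\<^sub>E {0..<k}
       \<and> R \<subseteq> I \<times> I \<and> refl_on I R \<and> trans R \<and> total_on I R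
       \<and> (d \<ge> 1 \<longrightarrow> (\<forall>i\<in>{1..n}. \<forall>i'\<in>{1..n}. i < i' \<longrightarrow> lt (i,0) (i',0)))
       \<and> (d = 0 \<longrightarrow> (\<forall>i\<in>{1..n}. \<forall>i'\<in>{1..n}. i < i' \<longrightarrow> Y i < Y i'))
       \<and> (\<forall>i\<in>{1..n}. \<forall>i'\<in>{1..n}. \<forall>j<d. eqv (i,j) (i',j) \<longrightarrow> Y i = Y i')
       \<and> (\<forall>i\<in>{1..n}. \<forall>j<d. \<forall>j'<d. j > j' \<longrightarrow> lt (i,j) (i,j'))
       \<and> (\<forall>x\<in>I. \<forall>y\<in>I. eqv x y \<longrightarrow> snd x = snd y)
       \<and> (\<forall>i\<in>{1..n}. \<forall>i'\<in>{1..n}. \<forall>j. 0 < j \<and> j < d \<longrightarrow>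
              \<not> eqv (i,j) (i',j) \<longrightarrow> \<not> eqv (i,j-1) (i',j-1)))"

definition CR_size :: "nat \<Rightarrow> nat \<Rightarrow> ((nat \<times> nat) \<times> (nat \<times> nat)) set \<Rightarrow> nat" where
  "CR_size n d R = card (CR_index n d // (R \<inter> R\<inverse>))"

text \<open>P_p(n, omega^d * k): number of CRs of size p.\<close>
definition P :: "nat \<Rightarrow> nat \<Rightarrow> nat \<Rightarrow> nat \<Rightarrow> nat" where
  "P p n d k = card {(Y, R). is_CR n d k Y R \<and> CR_size n d R = p}"

end

(*
  For d > 0 a coloring rule of size p on [omega^d]^n is the same thing as a rank map: a
  surjection f from the variables a_{i,j} onto {0..<p} with f (i, 0) increasing in i, f (i, j)
  decreasing in j, equal ranks only on equal levels, and equality of ranks propagating to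
  deeper levels; the preorder is read off by comparing ranks. The number of rank maps is
  invariant under order isomorphisms of rows and of ranks, which allows us to work with
  anchored maps, whose rows are named by their own first-level ranks L.

  For d >= 2 the least rank v0 can only sit at the deepest level. The rows that end in v0,
  together with the set V1 of ranks above them, form an anchored map of depth d - 1 with
  rows L \<inter> V1; the other rows form an anchored map of depth d on the ranks outside
  V1 and v0. Conversely any two such maps glue back together. Summing over V1 and over the
  ways L meets V1 gives the recursion, the binomial coefficient counting the choices of V1
  of a given size.
*)
theory Submission
  imports Defs "HOL-Library.Infinite_Set"
begin

section \<open>Order isomorphisms between finite sets\<close>

lemma strict_mono_on_inv_into:
  fixes h :: "'a::linorder \<Rightarrow> 'b::linorder"
  assumes "bij_betw h A B" "strict_mono_on A h"
  shows "strict_mono_on B (inv_into A h)"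
proof (rule strict_mono_onI)
  fix x y assume "x \<in> B" "y \<in> B" "x < y"
  with assms show "inv_into A h x < inv_into A h y"
    by (metis bij_betw_def f_inv_into_f inv_into_into strict_mono_on_less)
qed

lemma obtain_strict_mono_bij_betw:
  fixes A B :: "'a::wellorder set"
  assumes "finite A" "finite B" "card A = card B"
  obtains h where "bij_betw h A B" "strict_mono_on A h"
proof -
  obtain a where a: "bij_betw a {..<card A} A" "strict_mono_on {..<card A} a"
    using ex_bij_betw_strict_mono_card[OF assms(1)] .
  obtain b where b: "bij_betw b {..<card A} B" "strict_mono_on {..<card A} b"
    using ex_bij_betw_strict_mono_card[OF assms(2)] assms(3) by metis
  have "bij_betw (b \<circ> inv_into {..<card A} a) A B"
    using bij_betw_trans[OF bij_betw_inv_into[OF a(1)] b(1)] .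
  moreover have "strict_mono_on A (b \<circ> inv_into {..<card A} a)"
    using monotone_on_o[OF b(2) strict_mono_on_inv_into[OF a]] bij_betw_inv_into[OF a(1)]
    by (simp add: bij_betw_def)
  ultimately show ?thesis by (rule that)
qed

lemma strict_mono_on_bij_betw_self_id:
  fixes h :: "'a::linorder \<Rightarrow> 'a"
  assumes "finite A" "bij_betw h A A" "strict_mono_on A h" "a \<in> A"
  shows "h a = a"
proof -
  define rank where "rank x = card {y\<in>A. y < x}" for x
  have "strict_mono_on A rank"
    unfolding rank_def using assms(1) by (intro strict_mono_onI psubset_card_mono) auto
  have "{y\<in>A. y < h a} = h ` {y\<in>A. y < a}"
  proof
    show "{y\<in>A. y < h a} \<subseteq> h ` {y\<in>A. y < a}"
    proof
      fix x assume "x \<in> {y\<in>A. y < h a}"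
      moreover from this obtain y where "y \<in> A" "x = h y"
        using assms(2) by (auto simp: bij_betw_def)
      ultimately show "x \<in> h ` {y\<in>A. y < a}"
        using strict_mono_on_less[OF assms(3) _ assms(4)] by auto
    qed
    show "h ` {y\<in>A. y < a} \<subseteq> {y\<in>A. y < h a}"
      using assms(2-4) by (auto simp: bij_betw_def strict_mono_on_less)
  qed
  then have "rank (h a) = rank a"
    unfolding rank_def using assms(2)
    by (metis (no_types, lifting) bij_betw_def card_image inj_on_subset mem_Collect_eq subsetI)
  moreover have "h a \<in> A" using assms(2,4) by (auto simp: bij_betw_def)
  ultimately show ?thesis
    using strict_mono_on_eq[OF \<open>strict_mono_on A rank\<close>] assms(4) by blast
qed

section \<open>Sums over subsets of a given size\<close>

lemma card_eq_sum_card_fibres: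
  assumes "finite X" "finite K" "g ` X \<subseteq> K"
  shows "card X = (\<Sum>k\<in>K. card {x\<in>X. g x = k})"
  using sum.group[OF assms, of "\<lambda>_. 1 :: nat"] by simp

lemma sum_subsets_split:
  fixes a b :: "nat set \<Rightarrow> nat"
  assumes W: "finite W" and U: "U \<subseteq> W"
  shows "(\<Sum>L | L \<subseteq> W \<and> card L = n. a (L \<inter> U) * b (L - U))
    = (\<Sum>j\<le>n. (\<Sum>L1 | L1 \<subseteq> U \<and> card L1 = j. a L1) * (\<Sum>L2 | L2 \<subseteq> W - U \<and> card L2 = n - j. b L2))"
proof -
  let ?S = "{L. L \<subseteq> W \<and> card L = n}"
  have "card (L \<inter> U) \<in> {..n}" if "L \<in> ?S" for L
    using that W by (auto intro: card_mono finite_subset)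
  then have "(\<Sum>L\<in>?S. a (L \<inter> U) * b (L - U))
      = (\<Sum>j\<le>n. \<Sum>L\<in>{L \<in> ?S. card (L \<inter> U) = j}. a (L \<inter> U) * b (L - U))"
    using W by (intro sum.group[symmetric]) auto
  also have "\<dots> = (\<Sum>j\<le>n. (\<Sum>L1 | L1 \<subseteq> U \<and> card L1 = j. a L1)
      * (\<Sum>L2 | L2 \<subseteq> W - U \<and> card L2 = n - j. b L2))"
  proof (rule sum.cong[OF refl])
    fix j assume j: "j \<in> {..n}"
    let ?X = "{L1. L1 \<subseteq> U \<and> card L1 = j}" and ?Y = "{L2. L2 \<subseteq> W - U \<and> card L2 = n - j}"
    have "(\<Sum>L1\<in>?X. a L1) * (\<Sum>L2\<in>?Y. b L2) = (\<Sum>(L1, L2)\<in>?X \<times> ?Y. a L1 * b L2)"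
      by (simp add: sum_product sum.cartesian_product)
    also have "\<dots> = (\<Sum>L\<in>{L \<in> ?S. card (L \<inter> U) = j}. a (L \<inter> U) * b (L - U))"
    proof (rule sum.reindex_bij_witness[where i = "\<lambda>L. (L \<inter> U, L - U)" and j = "\<lambda>(L1, L2). L1 \<union> L2"])
      fix L assume L: "L \<in> {L \<in> ?S. card (L \<inter> U) = j}"
      then have "finite L" using W finite_subset by blast
      then have "card L = card (L \<inter> U) + card (L - U)"
        by (metis Int_Diff_Un Int_Diff_disjoint card_Un_disjoint finite_Diff finite_Int)
      with L show "(L \<inter> U, L - U) \<in> ?X \<times> ?Y" by auto
      show "(\<lambda>(L1, L2). L1 \<union> L2) (L \<inter> U, L - U) = L" by auto
    next
      fix p assume p: "p \<in> ?X \<times> ?Y"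
      then obtain L1 L2 where p: "p = (L1, L2)" "L1 \<subseteq> U" "L2 \<subseteq> W - U" "card L1 = j" "card L2 = n - j"
        by auto
      have "finite L1" "finite L2"
        using p(2,3) U W by (meson Diff_subset finite_subset subset_trans)+
      moreover have "L1 \<inter> L2 = {}" "(L1 \<union> L2) \<inter> U = L1" "(L1 \<union> L2) - U = L2"
        using p(2,3) by auto
      ultimately have union: "card (L1 \<union> L2) = n" "(L1 \<union> L2) \<inter> U = L1" "(L1 \<union> L2) - U = L2"
        using p(4,5) j by (auto simp: card_Un_disjoint)
      show "(\<lambda>L. (L \<inter> U, L - U)) ((\<lambda>(L1, L2). L1 \<union> L2) p) = p"
        using union p(1) by simp
      show "(\<lambda>(L1, L2). L1 \<union> L2) p \<in> {L \<in> ?S. card (L \<inter> U) = j}"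
        using union p U by auto
      show "(\<lambda>L. a (L \<inter> U) * b (L - U)) ((\<lambda>(L1, L2). L1 \<union> L2) p) = (\<lambda>(L1, L2). a L1 * b L2) p"
        using union p(1) by simp
    qed
    finally show "(\<Sum>L\<in>{L \<in> ?S. card (L \<inter> U) = j}. a (L \<inter> U) * b (L - U))
        = (\<Sum>L1\<in>?X. a L1) * (\<Sum>L2\<in>?Y. b L2)" ..
  qed
  finally show ?thesis .
qed

lemma sum_Pow_by_card:
  fixes F :: "nat \<Rightarrow> nat \<Rightarrow> nat"
  assumes "finite W"
  shows "(\<Sum>U\<in>Pow W. F (card U) (card (W - U))) = (\<Sum>i\<le>card W. (card W choose i) * F i (card W - i))"
proof -
  have "card U \<in> {..card W}" if "U \<in> Pow W" for U
    using that assms by (auto intro: card_mono)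
  then have "(\<Sum>U\<in>Pow W. F (card U) (card (W - U)))
      = (\<Sum>i\<le>card W. \<Sum>U\<in>{U \<in> Pow W. card U = i}. F (card U) (card (W - U)))"
    using assms by (intro sum.group[symmetric]) auto
  also have "\<dots> = (\<Sum>i\<le>card W. (card W choose i) * F i (card W - i))"
  proof (rule sum.cong[OF refl])
    fix i
    have "(\<Sum>U\<in>{U \<in> Pow W. card U = i}. F (card U) (card (W - U)))
        = (\<Sum>U\<in>{U \<in> Pow W. card U = i}. F i (card W - i))"
      using assms by (intro sum.cong) (auto simp: card_Diff_subset finite_subset)
    also have "\<dots> = (card W choose i) * F i (card W - i)"
      using n_subsets[OF assms, of i] by (simp add: Pow_def)
    finally show "(\<Sum>U\<in>{U \<in> Pow W. card U = i}. F (card U) (card (W - U)))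
        = (card W choose i) * F i (card W - i)" .
  qed
  finally show ?thesis .
qed

section \<open>Total preorders as rank functions\<close>

definition preorder_of :: "'a set \<Rightarrow> ('a \<Rightarrow> nat) \<Rightarrow> ('a \<times> 'a) set" where
  "preorder_of I f = {(x, y). x \<in> I \<and> y \<in> I \<and> f x \<le> f y}"

lemma preorder_of_strict_iff:
  "x \<in> I \<Longrightarrow> y \<in> I \<Longrightarrow>
    (x, y) \<in> preorder_of I f \<and> (y, x) \<notin> preorder_of I f \<longleftrightarrow> f x < f y"
  by (auto simp: preorder_of_def)

lemma preorder_of_equiv_iff:
  "x \<in> I \<Longrightarrow> y \<in> I \<Longrightarrow>
    (x, y) \<in> preorder_of I f \<and> (y, x) \<in> preorder_of I f \<longleftrightarrow> f x = f y"
  by (auto simp: preorder_of_def)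

lemma total_preorder_preorder_of:
  "preorder_of I f \<subseteq> I \<times> I" "refl_on I (preorder_of I f)" "trans (preorder_of I f)"
  "total_on I (preorder_of I f)"
  by (auto simp: preorder_of_def refl_on_def trans_def total_on_def)

lemma card_quotient_preorder_of:
  assumes "finite I"
  shows "card (I // (preorder_of I f \<inter> (preorder_of I f)\<inverse>)) = card (f ` I)"
proof -
  have "(preorder_of I f \<inter> (preorder_of I f)\<inverse>) `` {x} = {y\<in>I. f y = f x}" if "x \<in> I" for x
    using that by (auto simp: preorder_of_def)
  then have "I // (preorder_of I f \<inter> (preorder_of I f)\<inverse>) = (\<lambda>v. {y\<in>I. f y = v}) ` f ` I"
    unfolding quotient_def by (auto simp: image_image)
  moreover have "inj_on (\<lambda>v. {y\<in>I. f y = v}) (f ` I)"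
    by (rule inj_onI) blast
  ultimately show ?thesis by (simp add: card_image)
qed

lemma image_below_eq_atLeastLessThan:
  fixes f :: "'a \<Rightarrow> nat"
  assumes "f ` I = {0..<p}" "x \<in> I"
  shows "f ` {y\<in>I. f y < f x} = {0..<f x}"
proof
  show "{0..<f x} \<subseteq> f ` {y\<in>I. f y < f x}"
  proof
    fix v assume v: "v \<in> {0..<f x}"
    have "f x \<in> {0..<p}" using assms by blast
    with v have "v \<in> f ` I" unfolding assms(1) by auto
    with v show "v \<in> f ` {y\<in>I. f y < f x}" by auto
  qed
qed auto

lemma preorder_of_inject:
  fixes f g :: "'a \<Rightarrow> nat"
  assumes "finite I" "f ` I = {0..<p}" "g ` I = {0..<p}" "preorder_of I f = preorder_of I g" "x \<in> I"
  shows "f x = g x"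
proof -
  have le: "f y \<le> f z \<longleftrightarrow> g y \<le> g z" if "y \<in> I" "z \<in> I" for y z
    using assms(4) that unfolding preorder_of_def by blast
  have lt: "f y < f x \<longleftrightarrow> g y < g x" if "y \<in> I" for y
    using le[OF assms(5) that] by (meson not_le)
  define Y where "Y = {y\<in>I. f y < f x}"
  have Y: "Y = {y\<in>I. g y < g x}" "Y \<subseteq> I" "finite Y"
    using lt assms(1) by (auto simp: Y_def)
  have same: "preorder_of Y f = preorder_of Y g"
    using le Y(2) by (auto simp: preorder_of_def)
  have "f x = card (f ` Y)"
    using image_below_eq_atLeastLessThan[OF assms(2,5)] by (simp add: Y_def)
  also have "\<dots> = card (g ` Y)"
    using card_quotient_preorder_of[OF Y(3), of f] card_quotient_preorder_of[OF Y(3), of g] same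
    by simp
  also have "\<dots> = g x"
    using image_below_eq_atLeastLessThan[OF assms(3,5)] by (simp add: Y(1))
  finally show ?thesis .
qed

lemma total_preorder_le_iff_card_le:
  assumes "finite I" "refl_on I R" "trans R" "total_on I R" "x \<in> I" "y \<in> I"
  shows "(x, y) \<in> R \<longleftrightarrow> card {z\<in>I. (z, x) \<in> R} \<le> card {z\<in>I. (z, y) \<in> R}"
proof
  assume "(x, y) \<in> R"
  then have "{z\<in>I. (z, x) \<in> R} \<subseteq> {z\<in>I. (z, y) \<in> R}"
    using assms(3) by (auto dest: transD)
  then show "card {z\<in>I. (z, x) \<in> R} \<le> card {z\<in>I. (z, y) \<in> R}"
    using assms(1) by (auto intro: card_mono)
next
  assume card_le: "card {z\<in>I. (z, x) \<in> R} \<le> card {z\<in>I. (z, y) \<in> R}"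
  show "(x, y) \<in> R"
  proof (rule ccontr)
    assume "(x, y) \<notin> R"
    moreover have "(x, x) \<in> R"
      using assms(2,5) by (simp add: refl_on_def)
    ultimately have "(y, x) \<in> R"
      using assms(4-6) unfolding total_on_def by metis
    then have "{z\<in>I. (z, y) \<in> R} \<subset> {z\<in>I. (z, x) \<in> R}"
      using \<open>(x, y) \<notin> R\<close> \<open>(x, x) \<in> R\<close> assms(3,5) by (auto dest: transD)
    then have "card {z\<in>I. (z, y) \<in> R} < card {z\<in>I. (z, x) \<in> R}"
      using assms(1) by (intro psubset_card_mono) auto
    then show False
      using card_le by simp
  qed
qed

text \<open>A total preorder is induced by ranking the sizes of its down-sets.\<close>
lemma total_preorder_eq_preorder_of:
  assumes "finite I" "R \<subseteq> I \<times> I" "refl_on I R" "trans R" "total_on I R"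
  defines "p \<equiv> card (I // (R \<inter> R\<inverse>))"
  obtains f where "f \<in> I \<rightarrow>\<^sub>E {0..<p}" "f ` I = {0..<p}" "R = preorder_of I f"
proof -
  define c where "c x = card {z\<in>I. (z, x) \<in> R}" for x
  obtain h where h: "bij_betw h (c ` I) {0..<card (c ` I)}" "strict_mono_on (c ` I) h"
    using obtain_strict_mono_bij_betw[of "c ` I" "{0..<card (c ` I)}"] assms(1) by auto
  define f where "f = restrict (h \<circ> c) I"
  have "R = preorder_of I c"
    using total_preorder_le_iff_card_le[OF assms(1,3-5)] assms(2)
    unfolding c_def preorder_of_def by auto
  also have "\<dots> = preorder_of I f"
    using strict_mono_on_less_eq[OF h(2)] by (auto simp: preorder_of_def f_def)
  finally have R: "R = preorder_of I f" .
  have image: "f ` I = {0..<card (c ` I)}"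
  proof -
    have "f ` I = h ` c ` I" by (auto simp: f_def)
    then show ?thesis using h(1) by (simp add: bij_betw_def)
  qed
  have "p = card (f ` I)"
    unfolding p_def R by (rule card_quotient_preorder_of[OF assms(1)])
  with image have "f ` I = {0..<p}" by simp
  moreover from this have "f \<in> I \<rightarrow>\<^sub>E {0..<p}"
    by (auto simp: f_def)
  ultimately show ?thesis using R that by blast
qed

section \<open>Coloring rules as rank maps\<close>

text \<open>\<open>CR_map S d V f\<close>: \<open>f (i, j)\<close> is the rank, in \<open>V\<close>, of the class of the variable
  \<open>a\<^sub>i\<^sub>j\<close> (row \<open>i \<in> S\<close>, level \<open>j < d\<close>). The four order conditions are conditions
  (1), (3), (4), (5) of a coloring rule; condition (2) is vacuous for \<open>k = 1\<close>.\<close>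
definition CR_map :: "nat set \<Rightarrow> nat \<Rightarrow> nat set \<Rightarrow> (nat \<times> nat \<Rightarrow> nat) \<Rightarrow> bool" where
  "CR_map S d V f \<longleftrightarrow>
     f \<in> S \<times> {0..<d} \<rightarrow>\<^sub>E V \<and> f ` (S \<times> {0..<d}) = V
   \<and> (\<forall>i\<in>S. \<forall>i'\<in>S. i < i' \<longrightarrow> f (i, 0) < f (i', 0))
   \<and> (\<forall>i\<in>S. \<forall>j<d. \<forall>j'<j. f (i, j) < f (i, j'))
   \<and> (\<forall>i\<in>S. \<forall>i'\<in>S. \<forall>j<d. \<forall>j'<d. f (i, j) = f (i', j') \<longrightarrow> j = j')
   \<and> (\<forall>i\<in>S. \<forall>i'\<in>S. \<forall>j. Suc j < d \<longrightarrow> f (i, j) = f (i', j) \<longrightarrow> f (i, Suc j) = f (i', Suc j))"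

lemma CR_mapI:
  assumes "f \<in> S \<times> {0..<d} \<rightarrow>\<^sub>E V" "f ` (S \<times> {0..<d}) = V"
    "\<And>i i'. i \<in> S \<Longrightarrow> i' \<in> S \<Longrightarrow> i < i' \<Longrightarrow> f (i, 0) < f (i', 0)"
    "\<And>i j j'. i \<in> S \<Longrightarrow> j < d \<Longrightarrow> j' < j \<Longrightarrow> f (i, j) < f (i, j')"
    "\<And>i i' j j'. i \<in> S \<Longrightarrow> i' \<in> S \<Longrightarrow> j < d \<Longrightarrow> j' < d \<Longrightarrow> f (i, j) = f (i', j') \<Longrightarrow> j = j'"
    "\<And>i i' j. i \<in> S \<Longrightarrow> i' \<in> S \<Longrightarrow> Suc j < d \<Longrightarrow> f (i, j) = f (i', j) \<Longrightarrow>
      f (i, Suc j) = f (i', Suc j)"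
  shows "CR_map S d V f"
  unfolding CR_map_def
proof (intro conjI ballI allI impI)
  fix i i' j assume "i \<in> S" "i' \<in> S" "Suc j < d" "f (i, j) = f (i', j)"
  then show "f (i, Suc j) = f (i', Suc j)" by (rule assms(6))
qed (use assms(1-5) in blast)+

lemma CR_mapD:
  assumes "CR_map S d V f"
  shows "f \<in> S \<times> {0..<d} \<rightarrow>\<^sub>E V" "f ` (S \<times> {0..<d}) = V"
    "\<forall>i\<in>S. \<forall>i'\<in>S. i < i' \<longrightarrow> f (i, 0) < f (i', 0)"
    "\<forall>i\<in>S. \<forall>j<d. \<forall>j'<j. f (i, j) < f (i, j')"
    "\<forall>i\<in>S. \<forall>i'\<in>S. \<forall>j<d. \<forall>j'<d. f (i, j) = f (i', j') \<longrightarrow> j = j'"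
    "\<forall>i\<in>S. \<forall>i'\<in>S. \<forall>j. Suc j < d \<longrightarrow> f (i, j) = f (i', j) \<longrightarrow> f (i, Suc j) = f (i', Suc j)"
  using assms unfolding CR_map_def by - (elim conjE, assumption)+

lemmas CR_map_PiE = CR_mapD(1) and CR_map_image = CR_mapD(2)

lemma CR_map_in:
  assumes "CR_map S d V f" "i \<in> S" "j < d"
  shows "f (i, j) \<in> V"
  using PiE_mem[OF CR_map_PiE[OF assms(1)], of "(i, j)"] assms(2,3) by simp

lemma CR_map_undefined:
  assumes "CR_map S d V f" "x \<notin> S \<times> {0..<d}"
  shows "f x = undefined"
  using PiE_arb[OF CR_map_PiE[OF assms(1)] assms(2)] .

lemma CR_map_first_less:
  assumes "CR_map S d V f" "i \<in> S" "i' \<in> S" "i < i'"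
  shows "f (i, 0) < f (i', 0)"
  using CR_mapD(3)[OF assms(1)] assms(2-4) by blast

lemma CR_map_deeper_less:
  assumes "CR_map S d V f" "i \<in> S" "j < d" "j' < j"
  shows "f (i, j) < f (i, j')"
  using CR_mapD(4)[OF assms(1)] assms(2-4) by blast

lemma CR_map_eq_imp_same_level:
  assumes "CR_map S d V f" "i \<in> S" "i' \<in> S" "j < d" "j' < d" "f (i, j) = f (i', j')"
  shows "j = j'"
  using CR_mapD(5)[OF assms(1)] assms(2-6) by blast

lemma CR_map_eq_Suc:
  assumes "CR_map S d V f" "i \<in> S" "i' \<in> S" "Suc j < d" "f (i, j) = f (i', j)"
  shows "f (i, Suc j) = f (i', Suc j)"
  using CR_mapD(6)[OF assms(1)] assms(2-5) by blast

lemma CR_map_eq_propagate: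
  assumes "CR_map S d V f" "i \<in> S" "i' \<in> S" "f (i, j) = f (i', j)" "j \<le> k" "k < d"
  shows "f (i, k) = f (i', k)"
  using assms(5,6)
proof (induction k rule: dec_induct)
  case base
  show ?case by (rule assms(4))
next
  case (step k)
  then show ?case using CR_map_eq_Suc[OF assms(1-3)] by simp
qed

lemma finite_CR_maps:
  assumes "finite S" "finite V"
  shows "finite {f. CR_map S d V f}"
proof (rule finite_subset)
  show "{f. CR_map S d V f} \<subseteq> S \<times> {0..<d} \<rightarrow>\<^sub>E V"
    using CR_map_PiE by blast
  show "finite (S \<times> {0..<d} \<rightarrow>\<^sub>E V)"
    using assms by (intro finite_PiE) auto
qed

lemma strict_mono_on_first_level: "CR_map S d V f \<Longrightarrow> strict_mono_on S (\<lambda>i. f (i, 0))"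
  by (rule strict_mono_onI) (rule CR_map_first_less)

lemma CR_map_restrict:
  assumes f: "CR_map L d V f" and "A \<subseteq> L" "0 < d'" "d' \<le> d"
  shows "CR_map A d' (f ` (A \<times> {0..<d'})) (restrict f (A \<times> {0..<d'}))"
proof (rule CR_mapI)
  show "restrict f (A \<times> {0..<d'}) \<in> A \<times> {0..<d'} \<rightarrow>\<^sub>E f ` (A \<times> {0..<d'})"
    by auto
  show "restrict f (A \<times> {0..<d'}) ` (A \<times> {0..<d'}) = f ` (A \<times> {0..<d'})"
    by simp
next
  fix i i' assume "i \<in> A" "i' \<in> A" "i < i'"
  then show "restrict f (A \<times> {0..<d'}) (i, 0) < restrict f (A \<times> {0..<d'}) (i', 0)"
    using CR_map_first_less[OF f] assms(2,3) by auto
next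
  fix i j j' assume "i \<in> A" "j < d'" "j' < j"
  then show "restrict f (A \<times> {0..<d'}) (i, j) < restrict f (A \<times> {0..<d'}) (i, j')"
    using CR_map_deeper_less[OF f] assms(2,4) by auto
next
  fix i i' j j' assume ij: "i \<in> A" "i' \<in> A" "j < d'" "j' < d'"
    and "restrict f (A \<times> {0..<d'}) (i, j) = restrict f (A \<times> {0..<d'}) (i', j')"
  then have "f (i, j) = f (i', j')" by simp
  then show "j = j'"
    using CR_map_eq_imp_same_level[OF f] ij assms(2,4) by (meson order_less_le_trans subsetD)
next
  fix i i' j assume ij: "i \<in> A" "i' \<in> A" "Suc j < d'"
    and "restrict f (A \<times> {0..<d'}) (i, j) = restrict f (A \<times> {0..<d'}) (i', j)"
  then have "f (i, j) = f (i', j)" by simp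
  then have "f (i, Suc j) = f (i', Suc j)"
    using CR_map_eq_Suc[OF f] ij assms(2,4) by (meson order_less_le_trans subsetD)
  then show "restrict f (A \<times> {0..<d'}) (i, Suc j) = restrict f (A \<times> {0..<d'}) (i', Suc j)"
    using ij by simp
qed

lemma level_propagation_iff:
  assumes equiv: "\<And>x y. x \<in> S \<times> {0..<d} \<Longrightarrow> y \<in> S \<times> {0..<d} \<Longrightarrow>
    (x, y) \<in> R \<and> (y, x) \<in> R \<longleftrightarrow> f x = f y"
  shows "(\<forall>i\<in>S. \<forall>i'\<in>S. \<forall>j. 0 < j \<and> j < d \<longrightarrow>
      \<not> (((i, j), (i', j)) \<in> R \<and> ((i', j), (i, j)) \<in> R) \<longrightarrow>
      \<not> (((i, j - 1), (i', j - 1)) \<in> R \<and> ((i', j - 1), (i, j - 1)) \<in> R))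
    \<longleftrightarrow> (\<forall>i\<in>S. \<forall>i'\<in>S. \<forall>j. Suc j < d \<longrightarrow>
        f (i, j) = f (i', j) \<longrightarrow> f (i, Suc j) = f (i', Suc j))"
proof (intro iffI ballI allI impI)
  fix i i' j assume i: "i \<in> S" "i' \<in> S" and j: "Suc j < d"
    and eq: "f (i, j) = f (i', j)"
    and hyp: "\<forall>i\<in>S. \<forall>i'\<in>S. \<forall>j. 0 < j \<and> j < d \<longrightarrow>
      \<not> (((i, j), (i', j)) \<in> R \<and> ((i', j), (i, j)) \<in> R) \<longrightarrow>
      \<not> (((i, j - 1), (i', j - 1)) \<in> R \<and> ((i', j - 1), (i, j - 1)) \<in> R)"
  have "((i, j), (i', j)) \<in> R \<and> ((i', j), (i, j)) \<in> R"
    using equiv[of "(i, j)" "(i', j)"] i j eq by simp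
  then have "((i, Suc j), (i', Suc j)) \<in> R \<and> ((i', Suc j), (i, Suc j)) \<in> R"
    using hyp[rule_format, of i i' "Suc j"] i j by (metis diff_Suc_1 zero_less_Suc)
  then show "f (i, Suc j) = f (i', Suc j)"
    using equiv[of "(i, Suc j)" "(i', Suc j)"] i j by simp
next
  fix i i' j assume i: "i \<in> S" "i' \<in> S" and "0 < j \<and> j < d"
    and ne: "\<not> (((i, j), (i', j)) \<in> R \<and> ((i', j), (i, j)) \<in> R)"
    and hyp: "\<forall>i\<in>S. \<forall>i'\<in>S. \<forall>j. Suc j < d \<longrightarrow>
      f (i, j) = f (i', j) \<longrightarrow> f (i, Suc j) = f (i', Suc j)"
  then have j: "0 < j" "j < d" "j - 1 < d" by auto
  have "f (i, j) \<noteq> f (i', j)"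
    using equiv[of "(i, j)" "(i', j)"] i j ne by simp
  moreover have "Suc (j - 1) = j" using j by simp
  ultimately have "f (i, j - 1) \<noteq> f (i', j - 1)"
    using hyp[rule_format, of i i' "j - 1"] i j by metis
  then show "\<not> (((i, j - 1), (i', j - 1)) \<in> R \<and> ((i', j - 1), (i, j - 1)) \<in> R)"
    using equiv[of "(i, j - 1)" "(i', j - 1)"] i j by simp
qed

lemma is_CR_preorder_of_iff:
  assumes "0 < d" "f \<in> {1..n} \<times> {0..<d} \<rightarrow>\<^sub>E V" "f ` ({1..n} \<times> {0..<d}) = V"
  shows "is_CR n d 1 Y (preorder_of ({1..n} \<times> {0..<d}) f)
    \<longleftrightarrow> Y = (\<lambda>i\<in>{1..n}. 0) \<and> CR_map {1..n} d V f"
proof -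
  define R where "R = preorder_of ({1..n} \<times> {0..<d}) f"
  have Y: "Y \<in> {1..n} \<rightarrow>\<^sub>E {0..<1} \<longleftrightarrow> Y = (\<lambda>i\<in>{1..n}. 0)"
    by (auto simp: PiE_def extensional_def fun_eq_iff)
  have equiv: "(x, y) \<in> R \<and> (y, x) \<in> R \<longleftrightarrow> f x = f y"
    if "x \<in> {1..n} \<times> {0..<d}" "y \<in> {1..n} \<times> {0..<d}" for x y
    using that unfolding R_def by (rule preorder_of_equiv_iff)
  have shift: "(\<forall>i\<in>{1..n}. \<forall>i'\<in>{1..n}. \<forall>j. 0 < j \<and> j < d \<longrightarrow>
        \<not> (((i, j), (i', j)) \<in> R \<and> ((i', j), (i, j)) \<in> R) \<longrightarrow>
        \<not> (((i, j - 1), (i', j - 1)) \<in> R \<and> ((i', j - 1), (i, j - 1)) \<in> R))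
    \<longleftrightarrow> (\<forall>i\<in>{1..n}. \<forall>i'\<in>{1..n}. \<forall>j. Suc j < d \<longrightarrow>
        f (i, j) = f (i', j) \<longrightarrow> f (i, Suc j) = f (i', Suc j))"
    by (rule level_propagation_iff[OF equiv])
  show ?thesis
    unfolding is_CR_def Let_def CR_map_def CR_index_def Y R_def[symmetric] shift
    using assms
    by (simp add: R_def total_preorder_preorder_of preorder_of_strict_iff preorder_of_equiv_iff)
      (intro iffI; elim conjE; intro conjI;
        (assumption | (hypsubst; simp (no_asm); fail) | meson less_trans atLeastLessThan_iff le0))
qed

lemma is_CR_total_preorder:
  assumes "is_CR n d k Y R"
  shows "R \<subseteq> CR_index n d \<times> CR_index n d" "refl_on (CR_index n d) R" "trans R"
    "total_on (CR_index n d) R"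
  using assms unfolding is_CR_def Let_def by - (elim conjE, assumption)+

lemma inj_on_preorder_of_CR_maps:
  assumes "finite S"
  shows "inj_on (preorder_of (S \<times> {0..<d})) {f. CR_map S d {0..<p} f}"
proof (rule inj_onI, rule ext)
  fix f g x
  assume "f \<in> {f. CR_map S d {0..<p} f}" "g \<in> {f. CR_map S d {0..<p} f}"
    and eq: "preorder_of (S \<times> {0..<d}) f = preorder_of (S \<times> {0..<d}) g"
  then have f: "CR_map S d {0..<p} f" and g: "CR_map S d {0..<p} g"
    by simp_all
  show "f x = g x"
  proof (cases "x \<in> S \<times> {0..<d}")
    case True
    show ?thesis
      using preorder_of_inject[OF _ CR_map_image[OF f] CR_map_image[OF g] eq True] assms by simp
  next
    case False
    show ?thesis
      using CR_map_undefined[OF f False] CR_map_undefined[OF g False] by simp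
  qed
qed

lemma CRs_eq_image_preorder_of:
  assumes "0 < d"
  shows "{(Y, R). is_CR n d 1 Y R \<and> CR_size n d R = p}
    = (\<lambda>f. (\<lambda>i\<in>{1..n}. 0, preorder_of ({1..n} \<times> {0..<d}) f)) ` {f. CR_map {1..n} d {0..<p} f}"
    (is "?CRs = ?image")
proof (intro equalityI subsetI)
  let ?I = "{1..n} \<times> {0..<d}"
  fix z assume "z \<in> ?CRs"
  then obtain Y R where z: "z = (Y, R)" "is_CR n d 1 Y R" "CR_size n d R = p"
    by blast
  have "card (?I // (R \<inter> R\<inverse>)) = p"
    using z(3) by (simp add: CR_size_def CR_index_def)
  then obtain f where f: "f \<in> ?I \<rightarrow>\<^sub>E {0..<p}" "f ` ?I = {0..<p}" "R = preorder_of ?I f"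
    using total_preorder_eq_preorder_of[OF _ is_CR_total_preorder[OF z(2), unfolded CR_index_def]]
    by blast
  with z(2) have "Y = (\<lambda>i\<in>{1..n}. 0)" "CR_map {1..n} d {0..<p} f"
    using is_CR_preorder_of_iff[OF assms f(1,2)] by auto
  with z f(3) show "z \<in> ?image"
    by blast
next
  let ?I = "{1..n} \<times> {0..<d}"
  fix z assume "z \<in> ?image"
  then obtain f where f: "CR_map {1..n} d {0..<p} f" "z = (\<lambda>i\<in>{1..n}. 0, preorder_of ?I f)"
    by blast
  have "is_CR n d 1 (\<lambda>i\<in>{1..n}. 0) (preorder_of ?I f)"
    using is_CR_preorder_of_iff[OF assms CR_map_PiE[OF f(1)] CR_map_image[OF f(1)]] f(1)
    by simp
  moreover have "CR_size n d (preorder_of ?I f) = p"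
    using card_quotient_preorder_of[of ?I f] CR_map_image[OF f(1)]
    by (simp add: CR_size_def CR_index_def)
  ultimately show "z \<in> ?CRs"
    using f(2) by simp
qed

lemma P_eq_card_CR_maps:
  assumes "0 < d"
  shows "P p n d 1 = card {f. CR_map {1..n} d {0..<p} f}"
proof -
  have "inj_on (\<lambda>f. (\<lambda>i\<in>{1..n}. 0 :: nat, preorder_of ({1..n} \<times> {0..<d}) f))
      {f. CR_map {1..n} d {0..<p} f}"
    using inj_on_preorder_of_CR_maps[of "{1..n}" d p] by (simp add: inj_on_def)
  then show ?thesis
    unfolding P_def CRs_eq_image_preorder_of[OF assms] by (rule card_image)
qed

section \<open>Relabelling and anchored rank maps\<close>

definition relabel ::
  "(nat \<Rightarrow> nat) \<Rightarrow> (nat \<Rightarrow> nat) \<Rightarrow> nat set \<Rightarrow> nat \<Rightarrow> (nat \<times> nat \<Rightarrow> nat) \<Rightarrow> nat \<times> nat \<Rightarrow> nat" where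
  "relabel \<alpha> \<beta> S d f = restrict (\<lambda>(i, j). \<beta> (f (\<alpha> i, j))) (S \<times> {0..<d})"

lemma relabel_apply: "i \<in> S \<Longrightarrow> j < d \<Longrightarrow> relabel \<alpha> \<beta> S d f (i, j) = \<beta> (f (\<alpha> i, j))"
  by (simp add: relabel_def)

lemma relabel_relabel:
  assumes "\<alpha> ` S \<subseteq> S'"
  shows "relabel \<alpha> \<beta> S d (relabel \<alpha>' \<beta>' S' d f) = relabel (\<alpha>' \<circ> \<alpha>) (\<beta> \<circ> \<beta>') S d f"
  using assms by (auto simp: relabel_def fun_eq_iff)

lemma relabel_id:
  assumes "CR_map S d V f" "\<And>i. i \<in> S \<Longrightarrow> \<alpha> i = i" "\<And>v. v \<in> V \<Longrightarrow> \<beta> v = v"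
  shows "relabel \<alpha> \<beta> S d f = f"
proof
  fix x :: "nat \<times> nat"
  show "relabel \<alpha> \<beta> S d f x = f x"
    using assms CR_map_in[OF assms(1)] CR_map_undefined[OF assms(1), of x]
    by (cases "x \<in> S \<times> {0..<d}") (auto simp: relabel_def)
qed

lemma relabel_image:
  assumes "bij_betw \<alpha> S' S"
  shows "relabel \<alpha> \<beta> S' d f ` (S' \<times> {0..<d}) = \<beta> ` f ` (S \<times> {0..<d})"
proof
  show "relabel \<alpha> \<beta> S' d f ` (S' \<times> {0..<d}) \<subseteq> \<beta> ` f ` (S \<times> {0..<d})"
    using assms by (auto simp: relabel_def bij_betw_def)
  show "\<beta> ` f ` (S \<times> {0..<d}) \<subseteq> relabel \<alpha> \<beta> S' d f ` (S' \<times> {0..<d})"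
  proof
    fix w assume "w \<in> \<beta> ` f ` (S \<times> {0..<d})"
    then obtain i j where ij: "i \<in> S" "j < d" "w = \<beta> (f (i, j))"
      by auto
    moreover obtain i' where "i' \<in> S'" "i = \<alpha> i'"
      using assms ij(1) by (auto simp: bij_betw_def)
    ultimately show "w \<in> relabel \<alpha> \<beta> S' d f ` (S' \<times> {0..<d})"
      by (force simp: relabel_apply)
  qed
qed

lemma CR_map_relabel:
  assumes \<alpha>: "bij_betw \<alpha> S' S" "strict_mono_on S' \<alpha>"
    and \<beta>: "bij_betw \<beta> V V'" "strict_mono_on V \<beta>"
    and f: "CR_map S d V f"
  shows "CR_map S' d V' (relabel \<alpha> \<beta> S' d f)"
proof -
  have \<alpha>_in: "\<alpha> i \<in> S" if "i \<in> S'" for i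
    using \<alpha>(1) that by (auto simp: bij_betw_def)
  have \<beta>f_in: "\<beta> (f (\<alpha> i, j)) \<in> V'" if "i \<in> S'" "j < d" for i j
    using \<beta>(1) CR_map_in[OF f \<alpha>_in[OF that(1)] that(2)] by (auto simp: bij_betw_def)
  have \<beta>_eq: "\<beta> (f (\<alpha> i, j)) = \<beta> (f (\<alpha> i', j')) \<longleftrightarrow> f (\<alpha> i, j) = f (\<alpha> i', j')"
    if "i \<in> S'" "i' \<in> S'" "j < d" "j' < d" for i i' j j'
    by (intro strict_mono_on_eq[OF \<beta>(2)] CR_map_in[OF f] \<alpha>_in that)
  have \<beta>_less: "\<beta> (f (\<alpha> i, j)) < \<beta> (f (\<alpha> i', j')) \<longleftrightarrow> f (\<alpha> i, j) < f (\<alpha> i', j')"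
    if "i \<in> S'" "i' \<in> S'" "j < d" "j' < d" for i i' j j'
    by (intro strict_mono_on_less[OF \<beta>(2)] CR_map_in[OF f] \<alpha>_in that)
  show ?thesis
  proof (rule CR_mapI)
    show "relabel \<alpha> \<beta> S' d f \<in> S' \<times> {0..<d} \<rightarrow>\<^sub>E V'"
      using \<beta>f_in by (auto simp: relabel_def)
    show "relabel \<alpha> \<beta> S' d f ` (S' \<times> {0..<d}) = V'"
      using relabel_image[OF \<alpha>(1)] CR_map_image[OF f] \<beta>(1) by (simp add: bij_betw_def)
  next
    fix i i' assume i: "i \<in> S'" "i' \<in> S'" "i < i'"
    have "f (\<alpha> i, 0) < f (\<alpha> i', 0)"
      using CR_map_first_less[OF f \<alpha>_in \<alpha>_in] i strict_mono_onD[OF \<alpha>(2)] by blast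
    moreover from this have "0 < d"
      using CR_map_undefined[OF f, of "(\<alpha> i, 0)"] CR_map_undefined[OF f, of "(\<alpha> i', 0)"]
      by (cases d) auto
    ultimately show "relabel \<alpha> \<beta> S' d f (i, 0) < relabel \<alpha> \<beta> S' d f (i', 0)"
      using \<beta>_less i by (simp add: relabel_apply)
  next
    fix i j j' assume "i \<in> S'" "j < d" "j' < j"
    then show "relabel \<alpha> \<beta> S' d f (i, j) < relabel \<alpha> \<beta> S' d f (i, j')"
      using \<beta>_less CR_map_deeper_less[OF f \<alpha>_in] by (simp add: relabel_apply)
  next
    fix i i' j j' assume ij: "i \<in> S'" "i' \<in> S'" "j < d" "j' < d"
      and "relabel \<alpha> \<beta> S' d f (i, j) = relabel \<alpha> \<beta> S' d f (i', j')"
    then have "f (\<alpha> i, j) = f (\<alpha> i', j')"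
      using \<beta>_eq by (simp add: relabel_apply)
    then show "j = j'"
      using CR_map_eq_imp_same_level[OF f \<alpha>_in \<alpha>_in] ij by blast
  next
    fix i i' j assume ij: "i \<in> S'" "i' \<in> S'" "Suc j < d"
      and "relabel \<alpha> \<beta> S' d f (i, j) = relabel \<alpha> \<beta> S' d f (i', j)"
    then have "f (\<alpha> i, j) = f (\<alpha> i', j)"
      using \<beta>_eq by (simp add: relabel_apply)
    then have "f (\<alpha> i, Suc j) = f (\<alpha> i', Suc j)"
      using CR_map_eq_Suc[OF f \<alpha>_in \<alpha>_in] ij by blast
    then show "relabel \<alpha> \<beta> S' d f (i, Suc j) = relabel \<alpha> \<beta> S' d f (i', Suc j)"
      using ij by (simp add: relabel_apply)
  qed
qed

lemma relabel_relabel_cancel: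
  assumes "\<alpha> ` S \<subseteq> S'" "CR_map S d V f"
    "\<And>i. i \<in> S \<Longrightarrow> \<alpha>' (\<alpha> i) = i" "\<And>v. v \<in> V \<Longrightarrow> \<beta> (\<beta>' v) = v"
  shows "relabel \<alpha> \<beta> S d (relabel \<alpha>' \<beta>' S' d f) = f"
  using assms by (simp add: relabel_relabel relabel_id)

lemma card_CR_maps_relabel:
  assumes "bij_betw \<alpha> S' S" "strict_mono_on S' \<alpha>" "bij_betw \<beta> V V'" "strict_mono_on V \<beta>"
  shows "card {f. CR_map S d V f} = card {f. CR_map S' d V' f}"
proof (rule bij_betw_same_card[of "relabel \<alpha> \<beta> S' d"],
    rule bij_betw_byWitness[where f' = "relabel (inv_into S' \<alpha>) (inv_into V \<beta>) S d"])
  have inv: "bij_betw (inv_into S' \<alpha>) S S'" "strict_mono_on S (inv_into S' \<alpha>)"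
    "bij_betw (inv_into V \<beta>) V' V" "strict_mono_on V' (inv_into V \<beta>)"
    using assms by (simp_all add: bij_betw_inv_into strict_mono_on_inv_into)
  show "\<forall>f\<in>{f. CR_map S d V f}.
      relabel (inv_into S' \<alpha>) (inv_into V \<beta>) S d (relabel \<alpha> \<beta> S' d f) = f"
    using inv(1) assms(1,3)
    by (auto intro!: relabel_relabel_cancel simp: bij_betw_def f_inv_into_f inv_into_f_f)
  show "\<forall>g\<in>{f. CR_map S' d V' f}.
      relabel \<alpha> \<beta> S' d (relabel (inv_into S' \<alpha>) (inv_into V \<beta>) S d g) = g"
    using assms(1,3)
    by (auto intro!: relabel_relabel_cancel simp: bij_betw_def f_inv_into_f inv_into_f_f)
  show "relabel \<alpha> \<beta> S' d ` {f. CR_map S d V f} \<subseteq> {f. CR_map S' d V' f}"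
    using CR_map_relabel[OF assms] by blast
  show "relabel (inv_into S' \<alpha>) (inv_into V \<beta>) S d ` {f. CR_map S' d V' f} \<subseteq> {f. CR_map S d V f}"
    using CR_map_relabel[OF inv] by blast
qed

text \<open>Normal form modulo relabelling of the rows.\<close>
definition anchored_CR_maps :: "nat set \<Rightarrow> nat \<Rightarrow> nat set \<Rightarrow> (nat \<times> nat \<Rightarrow> nat) set" where
  "anchored_CR_maps L d V = {f. CR_map L d V f \<and> (\<forall>l\<in>L. f (l, 0) = l)}"

lemma relabel_anchored:
  assumes "0 < d" "finite L" "bij_betw \<alpha> L S" "strict_mono_on L \<alpha>"
    and f: "CR_map S d V f" "(\<lambda>i. f (i, 0)) ` S = L"
  shows "relabel \<alpha> id L d f \<in> anchored_CR_maps L d V"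
proof -
  have first: "bij_betw (\<lambda>i. f (i, 0)) S L"
    using f(2) strict_mono_on_imp_inj_on[OF strict_mono_on_first_level[OF f(1)]]
    by (simp add: bij_betw_def)
  have "f (\<alpha> l, 0) = l" if "l \<in> L" for l
  proof (rule strict_mono_on_bij_betw_self_id[OF assms(2) _ _ that])
    show "bij_betw (\<lambda>l. f (\<alpha> l, 0)) L L"
      using bij_betw_trans[OF assms(3) first] by (simp add: comp_def)
    show "strict_mono_on L (\<lambda>l. f (\<alpha> l, 0))"
      using monotone_on_o[OF strict_mono_on_first_level[OF f(1)] assms(4)] assms(3)
      by (simp add: comp_def bij_betw_def)
  qed
  then show ?thesis
    using CR_map_relabel[OF assms(3,4) bij_betw_id strict_mono_on_id f(1)] assms(1)
    by (simp add: anchored_CR_maps_def relabel_apply)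
qed

lemma card_first_level_fibre:
  assumes "0 < d" "finite S" "finite V" "L \<subseteq> V" "card L = card S"
  shows "card {f. CR_map S d V f \<and> (\<lambda>i. f (i, 0)) ` S = L} = card (anchored_CR_maps L d V)"
proof -
  have "finite L"
    using assms(3,4) finite_subset by blast
  obtain \<alpha> where \<alpha>: "bij_betw \<alpha> L S" "strict_mono_on L \<alpha>"
    using obtain_strict_mono_bij_betw[OF \<open>finite L\<close> assms(2,5)] .
  have \<alpha>': "bij_betw (inv_into L \<alpha>) S L" "strict_mono_on S (inv_into L \<alpha>)"
    using \<alpha> by (simp_all add: bij_betw_inv_into strict_mono_on_inv_into)
  have id: "bij_betw id V V" "strict_mono_on V id"
    by (simp_all add: strict_mono_on_id)
  show ?thesis
  proof (rule bij_betw_same_card[of "relabel \<alpha> id L d"],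
      rule bij_betw_byWitness[where f' = "relabel (inv_into L \<alpha>) id S d"])
    show "\<forall>f\<in>{f. CR_map S d V f \<and> (\<lambda>i. f (i, 0)) ` S = L}.
        relabel (inv_into L \<alpha>) id S d (relabel \<alpha> id L d f) = f"
      using \<alpha>' \<alpha>(1)
      by (auto intro!: relabel_relabel_cancel simp: bij_betw_def f_inv_into_f)
    show "\<forall>g\<in>anchored_CR_maps L d V. relabel \<alpha> id L d (relabel (inv_into L \<alpha>) id S d g) = g"
      using \<alpha>(1)
      by (auto intro!: relabel_relabel_cancel simp: anchored_CR_maps_def bij_betw_def)
    show "relabel \<alpha> id L d ` {f. CR_map S d V f \<and> (\<lambda>i. f (i, 0)) ` S = L} \<subseteq> anchored_CR_maps L d V"
      using relabel_anchored[OF assms(1) \<open>finite L\<close> \<alpha>] by blast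
    show "relabel (inv_into L \<alpha>) id S d ` anchored_CR_maps L d V
        \<subseteq> {f. CR_map S d V f \<and> (\<lambda>i. f (i, 0)) ` S = L}"
    proof
      fix h assume "h \<in> relabel (inv_into L \<alpha>) id S d ` anchored_CR_maps L d V"
      then obtain g where g: "CR_map L d V g" "\<And>l. l \<in> L \<Longrightarrow> g (l, 0) = l"
        "h = relabel (inv_into L \<alpha>) id S d g"
        by (auto simp: anchored_CR_maps_def)
      have "h (i, 0) = inv_into L \<alpha> i" if "i \<in> S" for i
        using g(2,3) \<alpha>'(1) that assms(1) by (auto simp: relabel_apply bij_betw_def)
      then have "(\<lambda>i. h (i, 0)) ` S = L"
        using \<alpha>'(1) by (simp add: bij_betw_def)
      then show "h \<in> {f. CR_map S d V f \<and> (\<lambda>i. f (i, 0)) ` S = L}"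
        using CR_map_relabel[OF \<alpha>' id g(1)] g(3) by simp
    qed
  qed
qed

lemma card_CR_maps_eq_sum_anchored:
  assumes "0 < d" "finite S" "finite V"
  shows "card {f. CR_map S d V f} = (\<Sum>L | L \<subseteq> V \<and> card L = card S. card (anchored_CR_maps L d V))"
proof -
  have "(\<lambda>i. f (i, 0)) ` S \<subseteq> V \<and> card ((\<lambda>i. f (i, 0)) ` S) = card S" if "CR_map S d V f" for f
    using CR_map_in[OF that _ assms(1)]
      card_image[OF strict_mono_on_imp_inj_on[OF strict_mono_on_first_level[OF that]]]
    by auto
  then have first_level: "(\<lambda>f. (\<lambda>i. f (i, 0)) ` S) ` {f. CR_map S d V f}
      \<subseteq> {L. L \<subseteq> V \<and> card L = card S}"
    by blast
  have "card {f. CR_map S d V f}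
      = (\<Sum>L | L \<subseteq> V \<and> card L = card S. card {f. CR_map S d V f \<and> (\<lambda>i. f (i, 0)) ` S = L})"
    using card_eq_sum_card_fibres[OF finite_CR_maps[OF assms(2,3)] _ first_level] assms(3)
    by simp
  also have "\<dots> = (\<Sum>L | L \<subseteq> V \<and> card L = card S. card (anchored_CR_maps L d V))"
    using card_first_level_fibre[OF assms] by (intro sum.cong) auto
  finally show ?thesis .
qed

lemma P_eq_sum_anchored:
  assumes "0 < d" "finite V"
  shows "P (card V) n d 1 = (\<Sum>L | L \<subseteq> V \<and> card L = n. card (anchored_CR_maps L d V))"
proof -
  obtain \<beta> where \<beta>: "bij_betw \<beta> V {0..<card V}" "strict_mono_on V \<beta>"
    using obtain_strict_mono_bij_betw[OF assms(2), of "{0..<card V}"] by auto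
  have "P (card V) n d 1 = card {f. CR_map {1..n} d {0..<card V} f}"
    by (rule P_eq_card_CR_maps[OF assms(1)])
  also have "\<dots> = card {f. CR_map {1..n} d V f}"
    using card_CR_maps_relabel[of id "{1..n}" "{1..n}", OF _ _ \<beta>] by (simp add: strict_mono_on_id)
  also have "\<dots> = (\<Sum>L | L \<subseteq> V \<and> card L = n. card (anchored_CR_maps L d V))"
    using card_CR_maps_eq_sum_anchored[OF assms(1) _ assms(2), of "{1..n}"] by simp
  finally show ?thesis .
qed

section \<open>Splitting off the least rank\<close>

definition min_rows :: "nat set \<Rightarrow> nat \<Rightarrow> nat \<Rightarrow> (nat \<times> nat \<Rightarrow> nat) \<Rightarrow> nat set" where
  "min_rows L e v0 f = {l\<in>L. f (l, e) = v0}"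

definition min_block_values :: "nat set \<Rightarrow> nat \<Rightarrow> nat \<Rightarrow> (nat \<times> nat \<Rightarrow> nat) \<Rightarrow> nat set" where
  "min_block_values L e v0 f = f ` (min_rows L e v0 f \<times> {0..<e})"

definition glue ::
  "nat set \<Rightarrow> nat \<Rightarrow> nat \<Rightarrow> (nat \<times> nat \<Rightarrow> nat) \<Rightarrow> (nat \<times> nat \<Rightarrow> nat) \<Rightarrow> nat \<times> nat \<Rightarrow> nat" where
  "glue A e v0 g1 g2 x = (if fst x \<in> A then if snd x = e then v0 else g1 x else g2 x)"

context
  fixes V :: "nat set" and v0 e :: nat
  assumes finite_V: "finite V" and v0_in_V: "v0 \<in> V" and v0_le: "\<And>v. v \<in> V \<Longrightarrow> v0 \<le> v"
    and e_pos: "0 < e"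
begin

lemma anchored_min_less_upper_levels:
  assumes "f \<in> anchored_CR_maps L (Suc e) V" "i \<in> L" "j < e"
  shows "v0 < f (i, j)"
proof -
  have f: "CR_map L (Suc e) V f"
    using assms(1) by (simp add: anchored_CR_maps_def)
  have "f (i, e) < f (i, j)"
    using CR_map_deeper_less[OF f assms(2)] assms(3) by simp
  then show ?thesis
    using v0_le[OF CR_map_in[OF f assms(2) lessI]] by simp
qed

lemma anchored_eq_min_iff:
  assumes "f \<in> anchored_CR_maps L (Suc e) V" "i \<in> L" "j < Suc e"
  shows "f (i, j) = v0 \<longleftrightarrow> j = e \<and> i \<in> min_rows L e v0 f"
proof (cases "j < e")
  case True
  then show ?thesis
    using anchored_min_less_upper_levels[OF assms(1,2) True] by simp
next
  case False
  with assms(3) have "j = e" by simp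
  then show ?thesis
    using assms(2) by (simp add: min_rows_def)
qed

lemma min_rows_eq_Int_min_block_values:
  assumes "f \<in> anchored_CR_maps L (Suc e) V"
  shows "min_rows L e v0 f = L \<inter> min_block_values L e v0 f"
proof
  have f: "CR_map L (Suc e) V f" and anchor: "\<And>l. l \<in> L \<Longrightarrow> f (l, 0) = l"
    using assms by (auto simp: anchored_CR_maps_def)
  show "min_rows L e v0 f \<subseteq> L \<inter> min_block_values L e v0 f"
  proof
    fix l assume l: "l \<in> min_rows L e v0 f"
    then have "l \<in> L" by (simp add: min_rows_def)
    with l show "l \<in> L \<inter> min_block_values L e v0 f"
      using anchor e_pos by (force simp: min_block_values_def)
  qed
  show "L \<inter> min_block_values L e v0 f \<subseteq> min_rows L e v0 f"
  proof
    fix l assume "l \<in> L \<inter> min_block_values L e v0 f"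
    then obtain a j where l: "l \<in> L" "a \<in> min_rows L e v0 f" "j < e" "l = f (a, j)"
      by (auto simp: min_block_values_def)
    have a: "a \<in> L"
      using l(2) by (simp add: min_rows_def)
    have "f (l, 0) = f (a, j)"
      using anchor[OF l(1)] l(4) by simp
    then have "0 = j"
      using CR_map_eq_imp_same_level[OF f l(1) a] l(3) by simp
    with l anchor[OF a] show "l \<in> min_rows L e v0 f" by simp
  qed
qed

lemma min_block_values_subset:
  assumes "f \<in> anchored_CR_maps L (Suc e) V"
  shows "min_block_values L e v0 f \<subseteq> V - {v0}"
proof
  fix v assume "v \<in> min_block_values L e v0 f"
  then obtain a j where a: "a \<in> L" "j < e" "v = f (a, j)"
    by (auto simp: min_block_values_def min_rows_def)
  then show "v \<in> V - {v0}"
    using assms anchored_min_less_upper_levels[OF assms a(1,2)]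
    by (auto simp: anchored_CR_maps_def intro: CR_map_in)
qed

lemma min_rows_nonempty:
  assumes "f \<in> anchored_CR_maps L (Suc e) V"
  shows "L \<inter> min_block_values L e v0 f \<noteq> {}"
proof -
  have f: "CR_map L (Suc e) V f"
    using assms by (simp add: anchored_CR_maps_def)
  have "v0 \<in> f ` (L \<times> {0..<Suc e})"
    using v0_in_V CR_map_image[OF f] by simp
  then obtain i j where ij: "i \<in> L" "j < Suc e" "f (i, j) = v0"
    by auto
  then have "i \<in> min_rows L e v0 f"
    using anchored_eq_min_iff[OF assms] by blast
  then show ?thesis
    using min_rows_eq_Int_min_block_values[OF assms] by blast
qed

lemma restrict_min_rows_anchored:
  assumes "f \<in> anchored_CR_maps L (Suc e) V"
  defines "V1 \<equiv> min_block_values L e v0 f"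
  shows "restrict f ((L \<inter> V1) \<times> {0..<e}) \<in> anchored_CR_maps (L \<inter> V1) e V1"
proof -
  have f: "CR_map L (Suc e) V f" and anchor: "\<And>l. l \<in> L \<Longrightarrow> f (l, 0) = l"
    using assms by (auto simp: anchored_CR_maps_def)
  have "f ` ((L \<inter> V1) \<times> {0..<e}) = V1"
    using min_rows_eq_Int_min_block_values[OF assms(1)] unfolding V1_def min_block_values_def by simp
  then have "CR_map (L \<inter> V1) e V1 (restrict f ((L \<inter> V1) \<times> {0..<e}))"
    using CR_map_restrict[OF f, of "L \<inter> V1" e] e_pos by simp
  then show ?thesis
    using anchor e_pos by (simp add: anchored_CR_maps_def)
qed

lemma value_notin_min_block_values:
  assumes "f \<in> anchored_CR_maps L (Suc e) V" "i \<in> L" "i \<notin> min_rows L e v0 f" "j < Suc e"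
  shows "f (i, j) \<notin> min_block_values L e v0 f"
proof
  have f: "CR_map L (Suc e) V f"
    using assms(1) by (simp add: anchored_CR_maps_def)
  assume "f (i, j) \<in> min_block_values L e v0 f"
  then obtain a j' where a: "a \<in> L" "f (a, e) = v0" "j' < e" "f (i, j) = f (a, j')"
    by (auto simp: min_block_values_def min_rows_def)
  have "j = j'"
    using CR_map_eq_imp_same_level[OF f assms(2) a(1) assms(4)] a(3,4) by simp
  then have "f (i, e) = f (a, e)"
    using CR_map_eq_propagate[OF f assms(2) a(1)] a(3,4) by simp
  with a(2) assms(2,3) show False
    by (simp add: min_rows_def)
qed

lemma other_rows_image:
  assumes "f \<in> anchored_CR_maps L (Suc e) V"
  defines "V1 \<equiv> min_block_values L e v0 f"
  shows "f ` ((L - V1) \<times> {0..<Suc e}) = V - {v0} - V1"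
proof -
  have f: "CR_map L (Suc e) V f"
    using assms(1) by (simp add: anchored_CR_maps_def)
  have rows: "min_rows L e v0 f = L \<inter> V1"
    unfolding V1_def by (rule min_rows_eq_Int_min_block_values[OF assms(1)])
  show ?thesis
  proof (intro equalityI subsetI)
    fix v assume "v \<in> f ` ((L - V1) \<times> {0..<Suc e})"
    then obtain i j where ij: "i \<in> L" "i \<notin> V1" "j < Suc e" "v = f (i, j)"
      by auto
    have "i \<notin> min_rows L e v0 f"
      using rows ij(2) by blast
    then show "v \<in> V - {v0} - V1"
      using anchored_eq_min_iff[OF assms(1) ij(1,3)] CR_map_in[OF f ij(1,3)]
        value_notin_min_block_values[OF assms(1) ij(1) _ ij(3)] ij(4)
      by (simp add: V1_def)
  next
    fix v assume v: "v \<in> V - {v0} - V1"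
    then have "v \<in> f ` (L \<times> {0..<Suc e})"
      using CR_map_image[OF f] by simp
    then obtain i j where ij: "i \<in> L" "j < Suc e" "v = f (i, j)"
      by auto
    have "i \<notin> min_rows L e v0 f"
    proof
      assume i: "i \<in> min_rows L e v0 f"
      show False
      proof (cases "j = e")
        case True
        then show False using i ij(3) v by (simp add: min_rows_def)
      next
        case False
        then have "v \<in> V1"
          using i ij(2,3) by (auto simp: V1_def min_block_values_def)
        then show False using v by simp
      qed
    qed
    with rows ij show "v \<in> f ` ((L - V1) \<times> {0..<Suc e})"
      by auto
  qed
qed

lemma restrict_other_rows_anchored:
  assumes "f \<in> anchored_CR_maps L (Suc e) V"
  defines "V1 \<equiv> min_block_values L e v0 f"
  shows "restrict f ((L - V1) \<times> {0..<Suc e}) \<in> anchored_CR_maps (L - V1) (Suc e) (V - {v0} - V1)"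
proof -
  have f: "CR_map L (Suc e) V f" and anchor: "\<And>l. l \<in> L \<Longrightarrow> f (l, 0) = l"
    using assms by (auto simp: anchored_CR_maps_def)
  have "CR_map (L - V1) (Suc e) (V - {v0} - V1) (restrict f ((L - V1) \<times> {0..<Suc e}))"
    using CR_map_restrict[OF f, of "L - V1" "Suc e"] other_rows_image[OF assms(1)]
    by (simp add: V1_def)
  then show ?thesis
    using anchor by (simp add: anchored_CR_maps_def)
qed

lemma glue_restrict:
  assumes "f \<in> anchored_CR_maps L (Suc e) V"
  defines "V1 \<equiv> min_block_values L e v0 f"
  shows "glue (L \<inter> V1) e v0 (restrict f ((L \<inter> V1) \<times> {0..<e}))
      (restrict f ((L - V1) \<times> {0..<Suc e})) = f"
proof
  fix x :: "nat \<times> nat"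
  obtain i j where x: "x = (i, j)" by fastforce
  have f: "CR_map L (Suc e) V f"
    using assms by (simp add: anchored_CR_maps_def)
  have rows: "min_rows L e v0 f = L \<inter> V1"
    unfolding V1_def by (rule min_rows_eq_Int_min_block_values[OF assms(1)])
  show "glue (L \<inter> V1) e v0 (restrict f ((L \<inter> V1) \<times> {0..<e}))
      (restrict f ((L - V1) \<times> {0..<Suc e})) x = f x"
  proof (cases "i \<in> L \<and> j < Suc e")
    case True
    then show ?thesis
      using rows x by (auto simp: glue_def min_rows_def)
  next
    case False
    then show ?thesis
      using CR_map_undefined[OF f, of x] x by (auto simp: glue_def)
  qed
qed

lemma anchored_CR_maps_empty_if_min_mem:
  assumes "v0 \<in> L"
  shows "anchored_CR_maps L (Suc e) V = {}"
proof (rule ccontr)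
  assume "anchored_CR_maps L (Suc e) V \<noteq> {}"
  then obtain f where f: "f \<in> anchored_CR_maps L (Suc e) V" by blast
  then have "f (v0, 0) = v0"
    using assms by (simp add: anchored_CR_maps_def)
  with anchored_min_less_upper_levels[OF f assms e_pos] show False by simp
qed

context
  fixes L V1 :: "nat set" and g1 g2 :: "nat \<times> nat \<Rightarrow> nat"
  assumes V1: "V1 \<subseteq> V - {v0}" and min_rows_ne: "L \<inter> V1 \<noteq> {}"
    and g1: "g1 \<in> anchored_CR_maps (L \<inter> V1) e V1"
    and g2: "g2 \<in> anchored_CR_maps (L - V1) (Suc e) (V - {v0} - V1)"
begin

abbreviation glued where "glued \<equiv> glue (L \<inter> V1) e v0 g1 g2"

lemma CR_map_g1: "CR_map (L \<inter> V1) e V1 g1"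
  and CR_map_g2: "CR_map (L - V1) (Suc e) (V - {v0} - V1) g2"
  using g1 g2 by (simp_all add: anchored_CR_maps_def)

lemma glued_cases:
  assumes "i \<in> L" "j < Suc e"
  obtains (upper) "i \<in> L \<inter> V1" "j < e" "glued (i, j) = g1 (i, j)" "g1 (i, j) \<in> V1"
    | (bottom) "i \<in> L \<inter> V1" "j = e" "glued (i, j) = v0"
    | (other) "i \<in> L - V1" "glued (i, j) = g2 (i, j)" "g2 (i, j) \<in> V - {v0} - V1"
  using assms CR_map_in[OF CR_map_g1, of i j] CR_map_in[OF CR_map_g2, of i j]
  by (cases "i \<in> V1"; cases "j = e") (auto simp: glue_def)

lemma glued_first_level: "l \<in> L \<Longrightarrow> glued (l, 0) = l"
  using g1 g2 e_pos by (auto simp: glue_def anchored_CR_maps_def)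

lemma glued_in_V: "i \<in> L \<Longrightarrow> j < Suc e \<Longrightarrow> glued (i, j) \<in> V"
  by (cases rule: glued_cases) (use V1 v0_in_V in auto)

lemma glued_undefined:
  assumes "x \<notin> L \<times> {0..<Suc e}"
  shows "glued x = undefined"
proof -
  obtain i j where x: "x = (i, j)" by fastforce
  show ?thesis
  proof (cases "i \<in> L \<inter> V1")
    case True
    with assms x have "(i, j) \<notin> (L \<inter> V1) \<times> {0..<e}" "j \<noteq> e" by auto
    with True x show ?thesis
      using CR_map_undefined[OF CR_map_g1] by (simp add: glue_def)
  next
    case False
    with assms x have "(i, j) \<notin> (L - V1) \<times> {0..<Suc e}" by auto
    with False x show ?thesis
      using CR_map_undefined[OF CR_map_g2] by (auto simp: glue_def)
  qed
qed

lemma glued_image: "glued ` (L \<times> {0..<Suc e}) = V"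
proof (intro equalityI subsetI)
  fix v assume "v \<in> glued ` (L \<times> {0..<Suc e})"
  then show "v \<in> V" using glued_in_V by auto
next
  fix v assume v: "v \<in> V"
  consider "v = v0" | "v \<in> V1" | "v \<in> V - {v0} - V1" using v by blast
  then show "v \<in> glued ` (L \<times> {0..<Suc e})"
  proof cases
    case 1
    obtain a where "a \<in> L \<inter> V1" using min_rows_ne by blast
    then have "glued (a, e) = v" "(a, e) \<in> L \<times> {0..<Suc e}"
      using 1 by (auto simp: glue_def)
    then show ?thesis by blast
  next
    case 2
    then have "v \<in> g1 ` ((L \<inter> V1) \<times> {0..<e})"
      using CR_map_image[OF CR_map_g1] by simp
    then obtain i j where ij: "i \<in> L \<inter> V1" "j < e" "v = g1 (i, j)"
      by auto
    then have "glued (i, j) = v" "(i, j) \<in> L \<times> {0..<Suc e}"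
      by (auto simp: glue_def)
    then show ?thesis by blast
  next
    case 3
    then have "v \<in> g2 ` ((L - V1) \<times> {0..<Suc e})"
      using CR_map_image[OF CR_map_g2] by simp
    then obtain i j where ij: "i \<in> L - V1" "j < Suc e" "v = g2 (i, j)"
      by auto
    then have "glued (i, j) = v" "(i, j) \<in> L \<times> {0..<Suc e}"
      by (auto simp: glue_def)
    then show ?thesis by blast
  qed
qed

lemma glued_in_V1_iff: "i \<in> L \<Longrightarrow> j < Suc e \<Longrightarrow> glued (i, j) \<in> V1 \<longleftrightarrow> i \<in> V1 \<and> j < e"
  by (cases rule: glued_cases) (use V1 in auto)

lemma glued_eq_min_iff: "i \<in> L \<Longrightarrow> j < Suc e \<Longrightarrow> glued (i, j) = v0 \<longleftrightarrow> i \<in> V1 \<and> j = e"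
  by (cases rule: glued_cases) (use V1 in auto)

lemma glued_eq_cases:
  assumes "i \<in> L" "i' \<in> L" "j < Suc e" "j' < Suc e" "glued (i, j) = glued (i', j')"
  obtains (upper) "i \<in> L \<inter> V1" "i' \<in> L \<inter> V1" "j < e" "j' < e" "g1 (i, j) = g1 (i', j')"
    | (bottom) "j = e" "j' = e"
    | (other) "i \<in> L - V1" "i' \<in> L - V1" "g2 (i, j) = g2 (i', j')"
proof -
  consider "i \<in> L \<inter> V1" "j < e" | "i \<in> L \<inter> V1" "j = e" | "i \<in> L - V1"
    using assms(1,3) by force
  then show thesis
  proof cases
    case 1
    then have "glued (i', j') \<in> V1"
      using assms(5) glued_in_V1_iff[OF assms(1,3)] by simp
    then have "i' \<in> L \<inter> V1" "j' < e"
      using glued_in_V1_iff[OF assms(2,4)] assms(2) by auto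
    with 1 show thesis
      using upper assms(5) by (simp add: glue_def)
  next
    case 2
    then have "glued (i', j') = v0"
      using assms(5) by (simp add: glue_def)
    then show thesis
      using bottom 2(2) glued_eq_min_iff[OF assms(2,4)] by simp
  next
    case 3
    then have "glued (i', j') \<notin> V1 \<and> glued (i', j') \<noteq> v0"
      using assms(5) glued_in_V1_iff[OF assms(1,3)] glued_eq_min_iff[OF assms(1,3)] by simp
    then have "i' \<in> L - V1"
      using glued_in_V1_iff[OF assms(2,4)] glued_eq_min_iff[OF assms(2,4)] assms(2,4) by auto
    with 3 show thesis
      using other assms(5) by (auto simp: glue_def)
  qed
qed

lemma glued_deeper_less:
  assumes i: "i \<in> L" and j: "j < Suc e" "j' < j"
  shows "glued (i, j) < glued (i, j')"
  using i j(1)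
proof (cases rule: glued_cases)
  case upper
  then show ?thesis
    using CR_map_deeper_less[OF CR_map_g1 upper(1,2) j(2)] j(2) by (simp add: glue_def)
next
  case bottom
  then have "glued (i, j') \<in> V1"
    using CR_map_in[OF CR_map_g1 bottom(1), of j'] j(2) by (simp add: glue_def)
  then have "v0 < glued (i, j')"
    using V1 v0_le by (metis DiffE insertCI le_neq_implies_less subsetD)
  then show ?thesis
    using bottom(3) by simp
next
  case other
  then show ?thesis
    using CR_map_deeper_less[OF CR_map_g2 other(1) j] by (simp add: glue_def)
qed

lemma glued_CR_map: "CR_map L (Suc e) V glued"
proof (rule CR_mapI)
  show "glued \<in> L \<times> {0..<Suc e} \<rightarrow>\<^sub>E V"
    using glued_in_V glued_undefined by (auto intro!: PiE_I)
  show "glued ` (L \<times> {0..<Suc e}) = V"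
    by (rule glued_image)
next
  fix i i' assume "i \<in> L" "i' \<in> L" "i < i'"
  then show "glued (i, 0) < glued (i', 0)"
    by (simp add: glued_first_level)
next
  fix i j j' assume "i \<in> L" "j < Suc e" "j' < j"
  then show "glued (i, j) < glued (i, j')"
    by (rule glued_deeper_less)
next
  fix i i' j j' assume ij: "i \<in> L" "i' \<in> L" "j < Suc e" "j' < Suc e"
    and eq: "glued (i, j) = glued (i', j')"
  from ij eq show "j = j'"
  proof (cases rule: glued_eq_cases)
    case upper
    then show ?thesis using CR_map_eq_imp_same_level[OF CR_map_g1] by blast
  next
    case other
    then show ?thesis using CR_map_eq_imp_same_level[OF CR_map_g2] ij(3,4) by blast
  qed simp
next
  fix i i' j assume ij: "i \<in> L" "i' \<in> L" "Suc j < Suc e"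
    and eq: "glued (i, j) = glued (i', j)"
  have j: "j < Suc e" using ij(3) by simp
  from ij(1,2) j j eq show "glued (i, Suc j) = glued (i', Suc j)"
  proof (cases rule: glued_eq_cases)
    case upper
    show ?thesis
    proof (cases "Suc j = e")
      case True
      then show ?thesis using upper by (simp add: glue_def)
    next
      case False
      with upper have "Suc j < e" by simp
      with upper have "g1 (i, Suc j) = g1 (i', Suc j)"
        using CR_map_eq_Suc[OF CR_map_g1] by blast
      with upper False show ?thesis by (simp add: glue_def)
    qed
  next
    case other
    then have "g2 (i, Suc j) = g2 (i', Suc j)"
      using CR_map_eq_Suc[OF CR_map_g2] ij(3) by blast
    with other show ?thesis by (simp add: glue_def)
  next
    case bottom
    with ij(3) show ?thesis by simp
  qed
qed

lemma glued_anchored: "glued \<in> anchored_CR_maps L (Suc e) V"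
  using glued_CR_map glued_first_level by (simp add: anchored_CR_maps_def)

lemma min_block_values_glued: "min_block_values L e v0 glued = V1"
proof -
  have "min_rows L e v0 glued = L \<inter> V1"
    using glued_eq_min_iff by (auto simp: min_rows_def)
  then have "min_block_values L e v0 glued = g1 ` ((L \<inter> V1) \<times> {0..<e})"
    unfolding min_block_values_def by (intro image_cong) (simp_all add: glue_def mem_Times_iff)
  then show ?thesis
    using CR_map_image[OF CR_map_g1] by simp
qed

lemma restrict_glued_min_rows: "restrict glued ((L \<inter> V1) \<times> {0..<e}) = g1"
proof
  fix x :: "nat \<times> nat"
  show "restrict glued ((L \<inter> V1) \<times> {0..<e}) x = g1 x"
  proof (cases "x \<in> (L \<inter> V1) \<times> {0..<e}")
    case True
    then have "fst x \<in> L \<inter> V1" "snd x \<noteq> e" by auto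
    with True show ?thesis by (simp add: glue_def)
  next
    case False
    then show ?thesis using CR_map_undefined[OF CR_map_g1 False] by simp
  qed
qed

lemma restrict_glued_other_rows: "restrict glued ((L - V1) \<times> {0..<Suc e}) = g2"
proof
  fix x :: "nat \<times> nat"
  show "restrict glued ((L - V1) \<times> {0..<Suc e}) x = g2 x"
  proof (cases "x \<in> (L - V1) \<times> {0..<Suc e}")
    case True
    then have "fst x \<notin> L \<inter> V1" by auto
    with True show ?thesis by (simp add: glue_def del: Int_iff)
  next
    case False
    then show ?thesis using CR_map_undefined[OF CR_map_g2 False] by simp
  qed
qed

end

lemma bij_betw_split_min_rows:
  assumes V1: "V1 \<subseteq> V - {v0}" "L \<inter> V1 \<noteq> {}"
  shows "bij_betw (\<lambda>f. (restrict f ((L \<inter> V1) \<times> {0..<e}), restrict f ((L - V1) \<times> {0..<Suc e})))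
    {f \<in> anchored_CR_maps L (Suc e) V. min_block_values L e v0 f = V1}
    (anchored_CR_maps (L \<inter> V1) e V1 \<times> anchored_CR_maps (L - V1) (Suc e) (V - {v0} - V1))"
proof (rule bij_betw_byWitness[where f' = "\<lambda>(g1, g2). glue (L \<inter> V1) e v0 g1 g2"])
  show "\<forall>f\<in>{f \<in> anchored_CR_maps L (Suc e) V. min_block_values L e v0 f = V1}.
      (\<lambda>(g1, g2). glue (L \<inter> V1) e v0 g1 g2)
        (restrict f ((L \<inter> V1) \<times> {0..<e}), restrict f ((L - V1) \<times> {0..<Suc e})) = f"
    using glue_restrict by auto
  show "\<forall>g\<in>anchored_CR_maps (L \<inter> V1) e V1 \<times> anchored_CR_maps (L - V1) (Suc e) (V - {v0} - V1).
      (\<lambda>f. (restrict f ((L \<inter> V1) \<times> {0..<e}), restrict f ((L - V1) \<times> {0..<Suc e})))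
        ((\<lambda>(g1, g2). glue (L \<inter> V1) e v0 g1 g2) g) = g"
    using restrict_glued_min_rows[OF V1] restrict_glued_other_rows[OF V1] by auto
  show "(\<lambda>f. (restrict f ((L \<inter> V1) \<times> {0..<e}), restrict f ((L - V1) \<times> {0..<Suc e})))
      ` {f \<in> anchored_CR_maps L (Suc e) V. min_block_values L e v0 f = V1}
      \<subseteq> anchored_CR_maps (L \<inter> V1) e V1 \<times> anchored_CR_maps (L - V1) (Suc e) (V - {v0} - V1)"
    using restrict_min_rows_anchored restrict_other_rows_anchored by blast
  show "(\<lambda>(g1, g2). glue (L \<inter> V1) e v0 g1 g2)
      ` (anchored_CR_maps (L \<inter> V1) e V1 \<times> anchored_CR_maps (L - V1) (Suc e) (V - {v0} - V1))
      \<subseteq> {f \<in> anchored_CR_maps L (Suc e) V. min_block_values L e v0 f = V1}"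
    using glued_anchored[OF V1] min_block_values_glued[OF V1] by auto
qed

lemma card_anchored_eq_sum_splits:
  assumes "finite L"
  shows "card (anchored_CR_maps L (Suc e) V)
    = (\<Sum>V1 | V1 \<subseteq> V - {v0} \<and> L \<inter> V1 \<noteq> {}.
        card (anchored_CR_maps (L \<inter> V1) e V1) * card (anchored_CR_maps (L - V1) (Suc e) (V - {v0} - V1)))"
proof -
  let ?K = "{V1. V1 \<subseteq> V - {v0} \<and> L \<inter> V1 \<noteq> {}}"
  have "finite (anchored_CR_maps L (Suc e) V)"
    using finite_CR_maps[OF assms finite_V] by (auto simp: anchored_CR_maps_def intro: finite_subset)
  moreover have "min_block_values L e v0 ` anchored_CR_maps L (Suc e) V \<subseteq> ?K"
    using min_block_values_subset min_rows_nonempty by blast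
  ultimately have "card (anchored_CR_maps L (Suc e) V)
      = (\<Sum>V1\<in>?K. card {f \<in> anchored_CR_maps L (Suc e) V. min_block_values L e v0 f = V1})"
    using finite_V by (intro card_eq_sum_card_fibres) auto
  also have "\<dots> = (\<Sum>V1\<in>?K.
      card (anchored_CR_maps (L \<inter> V1) e V1) * card (anchored_CR_maps (L - V1) (Suc e) (V - {v0} - V1)))"
  proof (rule sum.cong[OF refl])
    fix V1 assume "V1 \<in> ?K"
    then have V1: "V1 \<subseteq> V - {v0}" "L \<inter> V1 \<noteq> {}" by auto
    show "card {f \<in> anchored_CR_maps L (Suc e) V. min_block_values L e v0 f = V1}
        = card (anchored_CR_maps (L \<inter> V1) e V1) * card (anchored_CR_maps (L - V1) (Suc e) (V - {v0} - V1))"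
      using bij_betw_same_card[OF bij_betw_split_min_rows[OF V1]] by (simp add: card_cartesian_product)
  qed
  finally show ?thesis by simp
qed

end

section \<open>The recursion and the base cases\<close>

lemma sum_anchored_splits_eq_sum_P:
  assumes "0 < e" "finite W" "U \<subseteq> W"
  shows "(\<Sum>L | L \<subseteq> W \<and> card L = n. if L \<inter> U \<noteq> {}
      then card (anchored_CR_maps (L \<inter> U) e U) * card (anchored_CR_maps (L - U) (Suc e) (W - U)) else 0)
    = (\<Sum>j = 1..n. P (card U) j e 1 * P (card (W - U)) (n - j) (Suc e) 1)"
proof -
  \<comment> \<open>\<open>a\<close> vanishes on \<open>{}\<close>, which absorbs the side condition \<open>L \<inter> U \<noteq> {}\<close>\<close>
  define a where "a L1 = (if L1 = {} then 0 else card (anchored_CR_maps L1 e U))" for L1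
  define b where "b L2 = card (anchored_CR_maps L2 (Suc e) (W - U))" for L2
  have U: "finite U" "finite (W - U)"
    using assms(2,3) finite_subset by auto
  have "(\<Sum>L | L \<subseteq> W \<and> card L = n. if L \<inter> U \<noteq> {}
      then card (anchored_CR_maps (L \<inter> U) e U) * card (anchored_CR_maps (L - U) (Suc e) (W - U)) else 0)
    = (\<Sum>L | L \<subseteq> W \<and> card L = n. a (L \<inter> U) * b (L - U))"
    by (intro sum.cong refl) (simp add: a_def b_def)
  also have "\<dots> = (\<Sum>j\<le>n. (\<Sum>L1 | L1 \<subseteq> U \<and> card L1 = j. a L1)
      * (\<Sum>L2 | L2 \<subseteq> W - U \<and> card L2 = n - j. b L2))"
    by (rule sum_subsets_split[OF assms(2,3)])
  also have "\<dots> = (\<Sum>j = 1..n. (\<Sum>L1 | L1 \<subseteq> U \<and> card L1 = j. a L1)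
      * (\<Sum>L2 | L2 \<subseteq> W - U \<and> card L2 = n - j. b L2))"
  proof -
    have "{L1. L1 \<subseteq> U \<and> card L1 = 0} = {{}}"
      using U(1) by (auto dest: finite_subset)
    then have "(\<Sum>L1 | L1 \<subseteq> U \<and> card L1 = 0. a L1) = 0"
      by (simp add: a_def)
    moreover have "{..n} = insert 0 {1..n}" by auto
    ultimately show ?thesis by simp
  qed
  also have "\<dots> = (\<Sum>j = 1..n. P (card U) j e 1 * P (card (W - U)) (n - j) (Suc e) 1)"
  proof (rule sum.cong[OF refl])
    fix j assume "j \<in> {1..n}"
    then have "(\<Sum>L1 | L1 \<subseteq> U \<and> card L1 = j. a L1)
        = (\<Sum>L1 | L1 \<subseteq> U \<and> card L1 = j. card (anchored_CR_maps L1 e U))"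
      by (intro sum.cong) (auto simp: a_def)
    then show "(\<Sum>L1 | L1 \<subseteq> U \<and> card L1 = j. a L1) * (\<Sum>L2 | L2 \<subseteq> W - U \<and> card L2 = n - j. b L2)
        = P (card U) j e 1 * P (card (W - U)) (n - j) (Suc e) 1"
      using P_eq_sum_anchored[OF assms(1) U(1)] P_eq_sum_anchored[of "Suc e", OF _ U(2)]
      by (simp add: b_def)
  qed
  finally show ?thesis .
qed

theorem P_recursion:
  assumes "0 < e" "0 < p"
  shows "P p n (Suc e) 1 = (\<Sum>j = 1..n. \<Sum>i = 0..p - 1.
    (p - 1 choose i) * P i j e 1 * P (p - 1 - i) (n - j) (Suc e) 1)"
proof -
  define V where "V = {0..<p}"
  define W where "W = V - {0}"
  have V: "finite V" "0 \<in> V" "card V = p" and W: "finite W" "card W = p - 1"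
    using assms(2) by (auto simp: V_def W_def)
  let ?anch = "\<lambda>L U. card (anchored_CR_maps L (Suc e) U)"
  have "P p n (Suc e) 1 = (\<Sum>L | L \<subseteq> V \<and> card L = n. ?anch L V)"
    using P_eq_sum_anchored[of "Suc e" V n] V by simp
  also have "\<dots> = (\<Sum>L | L \<subseteq> W \<and> card L = n. ?anch L V)"
    using anchored_CR_maps_empty_if_min_mem[OF V(1,2) _ assms(1)] V(1)
    by (intro sum.mono_neutral_right) (auto simp: W_def)
  also have "\<dots> = (\<Sum>L | L \<subseteq> W \<and> card L = n. \<Sum>U\<in>Pow W. if L \<inter> U \<noteq> {}
      then card (anchored_CR_maps (L \<inter> U) e U) * ?anch (L - U) (W - U) else 0)"
  proof (rule sum.cong[OF refl])
    fix L assume "L \<in> {L. L \<subseteq> W \<and> card L = n}"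
    then have "finite L" using W(1) finite_subset by blast
    then have "?anch L V = (\<Sum>U \<in> {U \<in> Pow W. L \<inter> U \<noteq> {}}.
        card (anchored_CR_maps (L \<inter> U) e U) * ?anch (L - U) (W - U))"
      using card_anchored_eq_sum_splits[OF V(1,2) _ assms(1), of L] by (simp add: W_def Pow_def)
    also have "\<dots> = (\<Sum>U\<in>Pow W. if L \<inter> U \<noteq> {}
        then card (anchored_CR_maps (L \<inter> U) e U) * ?anch (L - U) (W - U) else 0)"
      using W(1) by (intro sum.inter_filter) simp
    finally show "?anch L V = \<dots>" .
  qed
  also have "\<dots> = (\<Sum>U\<in>Pow W. \<Sum>j = 1..n. P (card U) j e 1 * P (card (W - U)) (n - j) (Suc e) 1)"
    using sum_anchored_splits_eq_sum_P[OF assms(1) W(1)] by (subst sum.swap) simp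
  also have "\<dots> = (\<Sum>i\<le>p - 1. (p - 1 choose i) * (\<Sum>j = 1..n. P i j e 1 * P (p - 1 - i) (n - j) (Suc e) 1))"
    using sum_Pow_by_card[OF W(1), of "\<lambda>a b. \<Sum>j = 1..n. P a j e 1 * P b (n - j) (Suc e) 1"] W(2)
    by simp
  also have "\<dots> = (\<Sum>i = 0..p - 1. \<Sum>j = 1..n. (p - 1 choose i) * P i j e 1 * P (p - 1 - i) (n - j) (Suc e) 1)"
    by (simp add: sum_distrib_left mult.assoc atMost_atLeast0)
  also have "\<dots> = (\<Sum>j = 1..n. \<Sum>i = 0..p - 1. (p - 1 choose i) * P i j e 1 * P (p - 1 - i) (n - j) (Suc e) 1)"
    by (rule sum.swap)
  finally show ?thesis .
qed

lemma P_no_rows: "P p 0 d 1 = (if p = 0 then 1 else 0)"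
proof -
  have I: "CR_index 0 d = {}" by (simp add: CR_index_def)
  let ?Y = "\<lambda>i\<in>{1..0}. 0 :: nat"
  have "{(Y, R). is_CR 0 d 1 Y R \<and> CR_size 0 d R = p} = (if p = 0 then {(?Y, {})} else {})"
  proof (intro set_eqI iffI)
    fix z assume "z \<in> {(Y, R). is_CR 0 d 1 Y R \<and> CR_size 0 d R = p}"
    then obtain Y R where z: "z = (Y, R)" "is_CR 0 d 1 Y R" "CR_size 0 d R = p" by blast
    have "Y \<in> {1..0} \<rightarrow>\<^sub>E {0..<1}"
      using z(2) unfolding is_CR_def Let_def by - (elim conjE, assumption)
    then have "Y = ?Y" by (auto simp: PiE_def extensional_def fun_eq_iff)
    moreover have "R = {}"
      using is_CR_total_preorder(1)[OF z(2)] I by auto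
    moreover from this have "p = 0"
      using z(3) I by (simp add: CR_size_def)
    ultimately show "z \<in> (if p = 0 then {(?Y, {})} else {})"
      using z(1) by simp
  next
    fix z :: "(nat \<Rightarrow> nat) \<times> ((nat \<times> nat) \<times> nat \<times> nat) set"
    assume "z \<in> (if p = 0 then {(?Y, {})} else {})"
    then have "p = 0" "z = (?Y, {})" by (auto split: if_splits)
    moreover have "is_CR 0 d 1 ?Y {}"
      unfolding is_CR_def Let_def I by (simp add: refl_on_def total_on_def)
    moreover have "CR_size 0 d {} = 0" by (simp add: CR_size_def I)
    ultimately show "z \<in> {(Y, R). is_CR 0 d 1 Y R \<and> CR_size 0 d R = p}" by simp
  qed
  then show ?thesis unfolding P_def by simp
qed

lemma P_depth_0:
  assumes "1 \<le> n"
  shows "P p n 0 1 = (if n = 1 \<and> p = 0 then 1 else 0)"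
proof -
  have I: "CR_index n 0 = {}" by (simp add: CR_index_def)
  let ?Y = "\<lambda>i\<in>{1..n}. 0 :: nat"
  have "{(Y, R). is_CR n 0 1 Y R \<and> CR_size n 0 R = p} = (if n = 1 \<and> p = 0 then {(?Y, {})} else {})"
  proof (intro set_eqI iffI)
    fix z assume "z \<in> {(Y, R). is_CR n 0 1 Y R \<and> CR_size n 0 R = p}"
    then obtain Y R where z: "z = (Y, R)" "is_CR n 0 1 Y R" "CR_size n 0 R = p" by blast
    have Y: "Y \<in> {1..n} \<rightarrow>\<^sub>E {0..<1}" "\<forall>i\<in>{1..n}. \<forall>i'\<in>{1..n}. i < i' \<longrightarrow> Y i < Y i'"
      using z(2) unfolding is_CR_def Let_def by - (elim conjE, simp)+
    have "n = 1"
    proof (rule ccontr)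
      assume "n \<noteq> 1"
      with assms have one: "1 \<in> {1..n}" and two: "2 \<in> {1..n}" by auto
      have "Y 1 < Y 2"
        using Y(2)[rule_format, OF one two] by simp
      moreover have "Y 1 \<in> {0..<1}" "Y 2 \<in> {0..<1}"
        using PiE_mem[OF Y(1) one] PiE_mem[OF Y(1) two] .
      ultimately show False by simp
    qed
    moreover have "Y = ?Y"
      using Y(1) by (auto simp: PiE_def extensional_def fun_eq_iff)
    moreover have "R = {}"
      using is_CR_total_preorder(1)[OF z(2)] I by auto
    moreover from this have "p = 0"
      using z(3) I by (simp add: CR_size_def)
    ultimately show "z \<in> (if n = 1 \<and> p = 0 then {(?Y, {})} else {})"
      using z(1) by simp
  next
    fix z :: "(nat \<Rightarrow> nat) \<times> ((nat \<times> nat) \<times> nat \<times> nat) set"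
    assume "z \<in> (if n = 1 \<and> p = 0 then {(?Y, {})} else {})"
    then have "n = 1" "p = 0" "z = (?Y, {})" by (auto split: if_splits)
    moreover have "is_CR 1 0 1 (\<lambda>i\<in>{1..1}. 0) {}"
      unfolding is_CR_def Let_def by (simp add: CR_index_def refl_on_def total_on_def)
    moreover have "CR_size 1 0 {} = 0" by (simp add: CR_size_def CR_index_def)
    ultimately show "z \<in> {(Y, R). is_CR n 0 1 Y R \<and> CR_size n 0 R = p}" by simp
  qed
  then show ?thesis unfolding P_def by simp
qed

lemma anchored_CR_maps_depth_1:
  "anchored_CR_maps L 1 V = (if L = V then {restrict fst (L \<times> {0..<1})} else {})"
proof (intro set_eqI iffI)
  fix f assume f: "f \<in> anchored_CR_maps L 1 V"
  then have "CR_map L 1 V f" "\<And>l. l \<in> L \<Longrightarrow> f (l, 0) = l"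
    by (auto simp: anchored_CR_maps_def)
  moreover from this have "f = restrict fst (L \<times> {0..<1})"
    using CR_map_undefined by fastforce
  ultimately show "f \<in> (if L = V then {restrict fst (L \<times> {0..<1})} else {})"
    using CR_map_image by fastforce
next
  fix f :: "nat \<times> nat \<Rightarrow> nat"
  assume "f \<in> (if L = V then {restrict fst (L \<times> {0..<1})} else {})"
  then have f: "f = restrict fst (V \<times> {0..<1})" "L = V" by (auto split: if_splits)
  have "CR_map V 1 V f"
    unfolding f by (rule CR_mapI) (auto simp: image_iff)
  then show "f \<in> anchored_CR_maps L 1 V"
    using f by (simp add: anchored_CR_maps_def)
qed

lemma P_depth_1: "P p n 1 1 = (if n = p then 1 else 0)"
proof -
  have "P p n 1 1 = (\<Sum>L | L \<subseteq> {0..<p} \<and> card L = n. card (anchored_CR_maps L 1 {0..<p}))"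
    using P_eq_sum_anchored[of 1 "{0..<p}" n] by simp
  also have "\<dots> = (\<Sum>L | L \<subseteq> {0..<p} \<and> card L = n. if L = {0..<p} then 1 else 0)"
    by (intro sum.cong refl) (simp only: anchored_CR_maps_depth_1, simp)
  also have "\<dots> = (if n = p then 1 else 0)"
    by (simp add: sum.delta)
  finally show ?thesis .
qed

lemma P_no_classes:
  assumes "0 < d" "1 \<le> n"
  shows "P 0 n d 1 = 0"
proof -
  have "(1, 0) \<in> {1..n} \<times> {0..<d}"
    using assms by simp
  then have "\<not> CR_map {1..n} d {0..<0} f" for f
    using CR_map_in by fastforce
  then show ?thesis
    using P_eq_card_CR_maps[OF assms(1)] by simp
qed

theorem lemma8p1:
  fixes n d p :: nat
  shows
   "(d = 0 \<and> n \<ge> 2 \<longrightarrow> P p n d 1 = 0)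
  \<and> (n = 0 \<and> p = 0 \<longrightarrow> P p n d 1 = 1)
  \<and> (n = 0 \<and> p \<ge> 1 \<longrightarrow> P p n d 1 = 0)
  \<and> (d = 0 \<and> n = 1 \<and> p = 0 \<longrightarrow> P p n d 1 = 1)
  \<and> (d = 0 \<and> n = 1 \<and> p \<ge> 1 \<longrightarrow> P p n d 1 = 0)
  \<and> (d = 1 \<and> n \<ge> 1 \<and> n = p \<longrightarrow> P p n d 1 = 1)
  \<and> (d = 1 \<and> n \<ge> 1 \<and> n \<noteq> p \<longrightarrow> P p n d 1 = 0)
  \<and> (d \<ge> 2 \<and> n \<ge> 1 \<and> p = 0 \<longrightarrow> P p n d 1 = 0)
  \<and> (d \<ge> 2 \<and> n \<ge> 1 \<and> p \<ge> 1 \<longrightarrow>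
       P p n d 1 = (\<Sum>j = 1..n. \<Sum>i = 0..p-1.
          (p - 1 choose i) * P i j (d - 1) 1 * P (p - 1 - i) (n - j) d 1))"
proof (intro conjI impI)
  show "d = 0 \<and> n \<ge> 2 \<Longrightarrow> P p n d 1 = 0"
    and "d = 0 \<and> n = 1 \<and> p = 0 \<Longrightarrow> P p n d 1 = 1"
    and "d = 0 \<and> n = 1 \<and> p \<ge> 1 \<Longrightarrow> P p n d 1 = 0"
    using P_depth_0[of n p] by auto
  show "n = 0 \<and> p = 0 \<Longrightarrow> P p n d 1 = 1"
    and "n = 0 \<and> p \<ge> 1 \<Longrightarrow> P p n d 1 = 0"
    using P_no_rows[of p d] by auto
  show "d = 1 \<and> n \<ge> 1 \<and> n = p \<Longrightarrow> P p n d 1 = 1"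
    and "d = 1 \<and> n \<ge> 1 \<and> n \<noteq> p \<Longrightarrow> P p n d 1 = 0"
    using P_depth_1[of p n] by auto
  show "d \<ge> 2 \<and> n \<ge> 1 \<and> p = 0 \<Longrightarrow> P p n d 1 = 0"
    using P_no_classes[of d n] by auto
  assume "d \<ge> 2 \<and> n \<ge> 1 \<and> p \<ge> 1"
  then show "P p n d 1 = (\<Sum>j = 1..n. \<Sum>i = 0..p-1.
      (p - 1 choose i) * P i j (d - 1) 1 * P (p - 1 - i) (n - j) d 1)"
    using P_recursion[of "d - 1" p n] by (simp add: Suc_diff_Suc numeral_2_eq_2)
qed

end
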